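(* Let $a_1,\dots,a_7$ be positive integers and let $[a_1,\dots,a_7]$ be the simple polytope whose standard Gale diagram is a regular heptagon with $a_i$ points at the $i$-th vertex. Up to Davis–Januszkiewicz equivalence, there are exactly two small covers over $[a_1,\dots,a_7]$. Neither of them is a real toric manifold.
   Context: Let $v_1,\dots,v_7$ be the vertices, in counterclockwise order, of a regular heptagon in $\mathbb{R}^2$ centered at the origin $O$, and let $\phi:V\to\{v_1,\dots,v_7\}$ be a surjection with $|\phi^{-1}(v_i)|=a_i$. The simplicial complex $K$ on $V$ in which $I\subseteq V$ is a face iff $O\in\operatorname{conv}\{\phi(j):j\in V\setminus I\}$ is the boundary complex of the dual of the simple polytope $[a_1,\dots,a_7]$, of dimension $n=|V|-3$. A small cover over it corresponds to a non-singular characteristic map over $\mathbb{Z}_2$, i.e. $\lambda:V\to\mathbb{Z}_2^n$ with the vectors on each face of $K$ linearly independent over $\mathbb{Z}_2$; two are Davis–Januszkiewicz equivalent if they differ by an element of $GL_n(\mathbb{Z}_2)$. A real toric manifold is the fixed point set of the complex conjugation on a (compact smooth) toric manifold; a small cover over $K$ is a real toric manifold iff its $\mathbb{Z}_2$-characteristic map is D-J equivalent to the mod 2 reduction of (the primitive ray generators of) a complete non-singular fan over $K$. *)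

theory Defs
  imports "HOL-Analysis.Analysis" "HOL-Library.Z2"
begin

definition hept_vert :: "nat \<Rightarrow> complex" where
  "hept_vert i = cis (2 * pi * real i / 7)"

text \<open>The ground set V, with a_i points over the i-th vertex: V = {(i,k). 1 \<le> i \<le> 7, k < a_i};
  phi (i,k) = v_i.\<close>
definition hV :: "(nat \<Rightarrow> nat) \<Rightarrow> (nat \<times> nat) set" where
  "hV a = {(i, k). 1 \<le> i \<and> i \<le> 7 \<and> k < a i}"

definition hphi :: "nat \<times> nat \<Rightarrow> complex" where
  "hphi j = hept_vert (fst j)"

definition hface :: "(nat \<Rightarrow> nat) \<Rightarrow> (nat \<times> nat) set \<Rightarrow> bool" where
  "hface a I \<longleftrightarrow> I \<subseteq> hV a \<and> 0 \<in> convex hull (hphi ` (hV a - I))"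

definition hdim :: "(nat \<Rightarrow> nat) \<Rightarrow> nat" where
  "hdim a = card (hV a) - 3"

text \<open>Vectors of Z_2^n are represented as functions nat \<Rightarrow> bit vanishing from index n on.\<close>
definition in_Z2n :: "nat \<Rightarrow> (nat \<Rightarrow> bit) \<Rightarrow> bool" where
  "in_Z2n n x \<longleftrightarrow> (\<forall>i\<ge>n. x i = 0)"

definition lin_indep_Z2 :: "nat \<Rightarrow> ('v \<Rightarrow> nat \<Rightarrow> bit) \<Rightarrow> 'v set \<Rightarrow> bool" where
  "lin_indep_Z2 n lam S \<longleftrightarrow>
     (\<forall>c :: 'v \<Rightarrow> bit. (\<forall>i<n. (\<Sum>j\<in>S. c j * lam j i) = 0) \<longrightarrow> (\<forall>j\<in>S. c j = 0))"

text \<open>Non-singular characteristic map over Z_2 on K (a small cover over [a_1,...,a_7]).\<close>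
definition char_map_Z2 :: "(nat \<Rightarrow> nat) \<Rightarrow> (nat \<times> nat \<Rightarrow> nat \<Rightarrow> bit) \<Rightarrow> bool" where
  "char_map_Z2 a lam \<longleftrightarrow>
     (\<forall>j\<in>hV a. in_Z2n (hdim a) (lam j)) \<and>
     (\<forall>I. hface a I \<longrightarrow> lin_indep_Z2 (hdim a) lam I)"

definition GL_Z2 :: "nat \<Rightarrow> (nat \<Rightarrow> nat \<Rightarrow> bit) \<Rightarrow> bool" where
  "GL_Z2 n A \<longleftrightarrow> (\<exists>B. (\<forall>i<n. \<forall>k<n. (\<Sum>l<n. A i l * B l k) = (if i = k then 1 else 0)) \<and>
                        (\<forall>i<n. \<forall>k<n. (\<Sum>l<n. B i l * A l k) = (if i = k then 1 else 0)))"

definition DJ_equiv :: "(nat \<Rightarrow> nat) \<Rightarrow> (nat \<times> nat \<Rightarrow> nat \<Rightarrow> bit) \<Rightarrow> (nat \<times> nat \<Rightarrow> nat \<Rightarrow> bit) \<Rightarrow> bool" where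
  "DJ_equiv a lam lam' \<longleftrightarrow>
     (\<exists>A. GL_Z2 (hdim a) A \<and>
          (\<forall>j\<in>hV a. \<forall>i<hdim a. lam' j i = (\<Sum>k<hdim a. A i k * lam j k)))"

definition in_Zn :: "nat \<Rightarrow> (nat \<Rightarrow> int) \<Rightarrow> bool" where
  "in_Zn n x \<longleftrightarrow> (\<forall>i\<ge>n. x i = 0)"

definition in_Rn :: "nat \<Rightarrow> (nat \<Rightarrow> real) \<Rightarrow> bool" where
  "in_Rn n x \<longleftrightarrow> (\<forall>i\<ge>n. x i = 0)"

definition Z_basis :: "nat \<Rightarrow> (nat \<Rightarrow> int) set \<Rightarrow> bool" where
  "Z_basis n B \<longleftrightarrow> finite B \<and> card B = n \<and> (\<forall>b\<in>B. in_Zn n b) \<and>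
     (\<forall>x. in_Zn n x \<longrightarrow> (\<exists>c :: (nat \<Rightarrow> int) \<Rightarrow> int. \<forall>i. x i = (\<Sum>b\<in>B. c b * b i)))"

definition ray_cone :: "('v \<Rightarrow> nat \<Rightarrow> int) \<Rightarrow> 'v set \<Rightarrow> (nat \<Rightarrow> real) set" where
  "ray_cone u S = {x. \<exists>c :: 'v \<Rightarrow> real. (\<forall>j\<in>S. c j \<ge> 0) \<and>
                          (\<forall>i. x i = (\<Sum>j\<in>S. c j * real_of_int (u j i)))}"

text \<open>u (the ray generators, indexed by V) defines a complete non-singular fan over K:
  each face of K spans a cone generated by part of a Z-basis of Z^n (non-singular, and
  in particular simplicial with primitive generators), the cones over two faces meet in
  the cone over their intersection (fan), and the cones cover R^n (complete).\<close>
definition complete_nonsing_fan :: "(nat \<Rightarrow> nat) \<Rightarrow> (nat \<times> nat \<Rightarrow> nat \<Rightarrow> int) \<Rightarrow> bool" where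
  "complete_nonsing_fan a u \<longleftrightarrow>
     (\<forall>j\<in>hV a. in_Zn (hdim a) (u j)) \<and>
     (\<forall>I. hface a I \<longrightarrow> inj_on u I \<and> (\<exists>B. Z_basis (hdim a) B \<and> u ` I \<subseteq> B)) \<and>
     (\<forall>I J. hface a I \<longrightarrow> hface a J \<longrightarrow> ray_cone u I \<inter> ray_cone u J = ray_cone u (I \<inter> J)) \<and>
     (\<Union>{ray_cone u I | I. hface a I}) = {x. in_Rn (hdim a) x}"

definition mod2 :: "(nat \<times> nat \<Rightarrow> nat \<Rightarrow> int) \<Rightarrow> nat \<times> nat \<Rightarrow> nat \<Rightarrow> bit" where
  "mod2 u j i = of_int (u j i)"

definition real_toric :: "(nat \<Rightarrow> nat) \<Rightarrow> (nat \<times> nat \<Rightarrow> nat \<Rightarrow> bit) \<Rightarrow> bool" where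
  "real_toric a lam \<longleftrightarrow> (\<exists>u. complete_nonsing_fan a u \<and> DJ_equiv a (mod2 u) lam)"

end

theory Submission
  imports Defs "Jordan_Normal_Form.Determinant"
begin

text \<open>
  The complex has \<open>n + 3\<close> vertices, so Gale duality reduces everything to three dimensions.
  Fix the facet \<open>F0\<close> complementary to one vertex over each of \<open>v\<^sub>1, v\<^sub>2, v\<^sub>5\<close>. A
  characteristic map is, up to \<open>GL\<^sub>n\<close>, the standard basis on \<open>F0\<close> together with the
  coordinates of the three remaining vectors, and these are encoded by Gale vectors
  \<open>G v \<in> K\<^sup>3\<close>; the complement of \<open>{x, y, z}\<close> is independent iff \<open>det (G x, G y, G z) \<noteq> 0\<close>.
  The facets of the complex are the complements of triples lying over the fourteen triangles of
  the heptagon that contain the centre.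

  Over \<open>\<int>\<^sub>2\<close> the fourteen conditions \<open>det = 1\<close> force \<open>G\<close> to depend only on the heptagon
  vertex and leave exactly two solutions, which a single non-facet separates. Over \<open>\<int>\<close>, a
  complete non-singular fan makes all fourteen determinants \<open>\<plusminus>1\<close>, and the fan condition across each
  wall forces adjacent ones to have equal sign; the resulting integral system with all
  determinants \<open>1\<close> has no solution.
\<close>

fun dot3 :: "'a::comm_ring_1 \<times> 'a \<times> 'a \<Rightarrow> 'a \<times> 'a \<times> 'a \<Rightarrow> 'a" where
  "dot3 (a1,a2,a3) (b1,b2,b3) = a1*b1 + a2*b2 + a3*b3"

fun cross3 :: "'a::comm_ring_1 \<times> 'a \<times> 'a \<Rightarrow> 'a \<times> 'a \<times> 'a \<Rightarrow> 'a \<times> 'a \<times> 'a" where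
  "cross3 (a1,a2,a3) (b1,b2,b3) = (a2*b3 - a3*b2, a3*b1 - a1*b3, a1*b2 - a2*b1)"

fun det3 :: "'a::comm_ring_1 \<times> 'a \<times> 'a \<Rightarrow> 'a \<times> 'a \<times> 'a \<Rightarrow> 'a \<times> 'a \<times> 'a \<Rightarrow> 'a" where
  "det3 (a1,a2,a3) (b1,b2,b3) (c1,c2,c3) = a1*(b2*c3 - b3*c2) - a2*(b1*c3 - b3*c1) + a3*(b1*c2 - b2*c1)"

lemma dot3_cross3: "dot3 (cross3 a b) c = det3 a b c"
  by (cases a; cases b; cases c) (simp add: algebra_simps)

lemma dot3_zero_left [simp]: "dot3 (0,0,0) x = 0"
  by (cases x) simp

lemma det3_swap_23: "det3 a c b = - det3 a b c"
  and det3_rotate: "det3 b c a = det3 a b c"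
  by (cases a; cases b; cases c; simp add: algebra_simps)+

lemma det3_same_13: "det3 a b a = 0"
  and det3_same_23: "det3 a b b = 0"
  by (cases a; cases b; simp add: algebra_simps)+

lemma det3_mult:
  "det3 p q r * det3 a b c =
     det3 (dot3 p a, dot3 p b, dot3 p c) (dot3 q a, dot3 q b, dot3 q c) (dot3 r a, dot3 r b, dot3 r c)"
  by (cases p; cases q; cases r; cases a; cases b; cases c) (simp add: algebra_simps)

lemma det3_int_unit_if_dual_basis:
  fixes a b c :: "int \<times> int \<times> int"
  assumes "dot3 p a = 1" "dot3 p b = 0" "dot3 p c = 0"
    "dot3 q a = 0" "dot3 q b = 1" "dot3 q c = 0"
    "dot3 r a = 0" "dot3 r b = 0" "dot3 r c = 1"
  shows "\<bar>det3 a b c\<bar> = 1"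
proof -
  have "det3 p q r * det3 a b c = 1" unfolding det3_mult assms by simp
  then show ?thesis using zmult_eq_1_iff by fastforce
qed

text \<open>A family \<open>w\<close> indexed by \<open>'v\<close> stands for vectors in \<open>K\<^sup>n\<close>; only the
  coordinates below \<open>n\<close> are taken into account.\<close>

definition lin_rel :: "nat \<Rightarrow> ('v \<Rightarrow> nat \<Rightarrow> 'a::comm_ring_1) \<Rightarrow> 'v set \<Rightarrow> ('v \<Rightarrow> 'a) \<Rightarrow> bool" where
  "lin_rel n w S l \<longleftrightarrow> (\<forall>i<n. (\<Sum>v\<in>S. l v * w v i) = 0)"

definition lin_indep_on :: "nat \<Rightarrow> ('v \<Rightarrow> nat \<Rightarrow> 'a::comm_ring_1) \<Rightarrow> 'v set \<Rightarrow> bool" where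
  "lin_indep_on n w S \<longleftrightarrow> (\<forall>l. lin_rel n w S l \<longrightarrow> (\<forall>v\<in>S. l v = 0))"

lemma lin_indep_Z2_iff: "lin_indep_Z2 n lam S \<longleftrightarrow> lin_indep_on n lam S"
  unfolding lin_indep_Z2_def lin_indep_on_def lin_rel_def by simp

lemma lin_rel_lincomb:
  assumes "lin_rel n w S l1" "lin_rel n w S l2"
  shows "lin_rel n w S (\<lambda>v. a * l1 v + b * l2 v)"
  using assms unfolding lin_rel_def
  by (simp add: distrib_right sum.distrib mult.assoc sum_distrib_left[symmetric])

lemma lin_rel_extend_zero:
  assumes "finite S" "T \<subseteq> S"
  shows "lin_rel n w S (\<lambda>v. if v \<in> T then l v else 0) \<longleftrightarrow> lin_rel n w T l"
proof -
  have "(\<Sum>v\<in>S. (if v \<in> T then l v else 0) * w v i) = (\<Sum>v\<in>T. l v * w v i)" for i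
    using assms by (intro sum.mono_neutral_cong_right) auto
  then show ?thesis unfolding lin_rel_def by simp
qed

lemma lin_indep_on_subset:
  assumes "lin_indep_on n w S" "T \<subseteq> S" "finite S"
  shows "lin_indep_on n w T"
  unfolding lin_indep_on_def
proof (intro allI impI ballI)
  fix l v assume "lin_rel n w T l" "v \<in> T"
  then have "lin_rel n w S (\<lambda>v. if v \<in> T then l v else 0)"
    using lin_rel_extend_zero[OF assms(3,2)] by blast
  then show "l v = 0" using assms(1) \<open>v \<in> T\<close> \<open>T \<subseteq> S\<close> unfolding lin_indep_on_def by force
qed

lemma lin_indep_on_if_transformed:
  assumes "\<forall>v\<in>S. \<forall>i<n. w' v i = (\<Sum>k<n. A i k * w v k)" and "lin_indep_on n w' S"
  shows "lin_indep_on n w S"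
  unfolding lin_indep_on_def
proof (intro allI impI)
  fix l assume rel: "lin_rel n w S l"
  have "lin_rel n w' S l" unfolding lin_rel_def
  proof (intro allI impI)
    fix i assume "i < n"
    then have "(\<Sum>v\<in>S. l v * w' v i) = (\<Sum>v\<in>S. \<Sum>k<n. A i k * (l v * w v k))"
      using assms(1) by (intro sum.cong) (auto simp: sum_distrib_left algebra_simps)
    also have "\<dots> = (\<Sum>k<n. A i k * (\<Sum>v\<in>S. l v * w v k))"
      by (subst sum.swap) (simp add: sum_distrib_left)
    also have "\<dots> = 0" using rel unfolding lin_rel_def by simp
    finally show "(\<Sum>v\<in>S. l v * w' v i) = 0" .
  qed
  then show "\<forall>v\<in>S. l v = 0" using assms(2) unfolding lin_indep_on_def by blast
qed

lemma mat_times_mat_fun: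
  fixes P Q :: "nat \<Rightarrow> nat \<Rightarrow> 'a::comm_ring_1"
  shows "mat n n (\<lambda>(i,j). P i j) * mat n n (\<lambda>(i,j). Q i j) = mat n n (\<lambda>(i,k). \<Sum>l<n. P i l * Q l k)"
  by (rule eq_matI) (auto simp: scalar_prod_def row_def col_def lessThan_atLeast0 intro!: sum.cong)

lemma mat_fun_eq_one_iff:
  "mat n n (\<lambda>(i,k). M i k) = 1\<^sub>m n \<longleftrightarrow> (\<forall>i<n. \<forall>k<n. M i k = (if i = k then 1 else 0))"
  by (auto simp: mat_eq_iff)

lemma matrix_left_inverse_if_right_inverse:
  fixes P Q :: "nat \<Rightarrow> nat \<Rightarrow> 'a::field"
  assumes "\<forall>i<n. \<forall>k<n. (\<Sum>l<n. P i l * Q l k) = (if i = k then 1 else 0)"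
  shows "\<forall>i<n. \<forall>k<n. (\<Sum>l<n. Q i l * P l k) = (if i = k then 1 else 0)"
proof -
  have "mat n n (\<lambda>(i,j). P i j) * mat n n (\<lambda>(i,j). Q i j) = 1\<^sub>m n"
    using assms unfolding mat_times_mat_fun mat_fun_eq_one_iff .
  then have "mat n n (\<lambda>(i,j). Q i j) * mat n n (\<lambda>(i,j). P i j) = 1\<^sub>m n"
    by (rule mat_mult_left_right_inverse[OF mat_carrier mat_carrier])
  then show ?thesis unfolding mat_times_mat_fun mat_fun_eq_one_iff .
qed

lemma matrix_inverse_if_injective:
  fixes P :: "nat \<Rightarrow> nat \<Rightarrow> 'a::field"
  assumes "\<forall>c. (\<forall>i<n. (\<Sum>l<n. P i l * c l) = 0) \<longrightarrow> (\<forall>l<n. c l = 0)"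
  shows "\<exists>Q. (\<forall>i<n. \<forall>k<n. (\<Sum>l<n. P i l * Q l k) = (if i = k then 1 else 0)) \<and>
             (\<forall>i<n. \<forall>k<n. (\<Sum>l<n. Q i l * P l k) = (if i = k then 1 else 0))"
proof -
  let ?P = "mat n n (\<lambda>(i,j). P i j)"
  have "det ?P \<noteq> 0"
  proof
    assume "det ?P = 0"
    then obtain v where v: "v \<in> carrier_vec n" "v \<noteq> 0\<^sub>v n" "?P *\<^sub>v v = 0\<^sub>v n"
      using det_0_iff_vec_prod_zero_field[of ?P n] by auto
    have "\<forall>i<n. (\<Sum>l<n. P i l * v $ l) = 0"
    proof (intro allI impI)
      fix i assume "i < n"
      then have "(?P *\<^sub>v v) $ i = 0" using v(3) by simp
      then show "(\<Sum>l<n. P i l * v $ l) = 0" using \<open>i < n\<close> v(1)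
        by (simp add: scalar_prod_def row_def lessThan_atLeast0)
    qed
    then have "v = 0\<^sub>v n" using assms v(1) by (intro eq_vecI) auto
    then show False using v(2) by simp
  qed
  then obtain B where B: "B \<in> carrier_mat n n" "?P * B = 1\<^sub>m n"
    using det_non_zero_imp_unit[of ?P n "()"] unfolding Units_def ring_mat_def by auto
  have "B = mat n n (\<lambda>(i,j). B $$ (i,j))" using B(1) by (intro eq_matI) auto
  with B(2) have "?P * mat n n (\<lambda>(i,j). B $$ (i,j)) = 1\<^sub>m n" by simp
  then have right: "\<forall>i<n. \<forall>k<n. (\<Sum>l<n. P i l * B $$ (l,k)) = (if i = k then 1 else 0)"
    unfolding mat_times_mat_fun mat_fun_eq_one_iff .
  show ?thesis
    by (intro exI[of _ "\<lambda>l k. B $$ (l,k)"] conjI right matrix_left_inverse_if_right_inverse[OF right])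
qed

definition is_combination :: "nat \<Rightarrow> ('v \<Rightarrow> nat \<Rightarrow> 'a::comm_ring_1) \<Rightarrow> 'v set \<Rightarrow> ('v \<Rightarrow> 'a) \<Rightarrow> (nat \<Rightarrow> 'a) \<Rightarrow> bool" where
  "is_combination n w F c x \<longleftrightarrow> (\<forall>i<n. x i = (\<Sum>v\<in>F. c v * w v i))"

lemma lin_indep_on_iff_columns:
  assumes e: "bij_betw e {..<n} F"
  shows "lin_indep_on n w F \<longleftrightarrow> (\<forall>c. (\<forall>i<n. (\<Sum>l<n. w (e l) i * c l) = 0) \<longrightarrow> (\<forall>l<n. c l = 0))"
proof -
  define e' where "e' = the_inv_into {..<n} e"
  have e'e: "l < n \<Longrightarrow> e' (e l) = l" for l
    unfolding e'_def using e by (simp add: bij_betw_def the_inv_into_f_f)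
  have ee': "v \<in> F \<Longrightarrow> e (e' v) = v" for v
    unfolding e'_def using e by (simp add: bij_betw_def f_the_inv_into_f)
  have sums: "(\<Sum>v\<in>F. l v * w v i) = (\<Sum>k<n. w (e k) i * l (e k))" for l i
    using sum.reindex_bij_betw[OF e, of "\<lambda>v. l v * w v i"] by (simp add: mult.commute)
  have rel: "lin_rel n w F l \<longleftrightarrow> (\<forall>i<n. (\<Sum>k<n. w (e k) i * l (e k)) = 0)" for l
    unfolding lin_rel_def sums ..
  show ?thesis
  proof
    assume ind: "lin_indep_on n w F"
    show "\<forall>c. (\<forall>i<n. (\<Sum>l<n. w (e l) i * c l) = 0) \<longrightarrow> (\<forall>l<n. c l = 0)"
    proof (intro allI impI)
      fix c l assume "\<forall>i<n. (\<Sum>l<n. w (e l) i * c l) = 0" "l < n"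
      then have "lin_rel n w F (c \<circ> e')" unfolding rel by (simp add: e'e)
      then show "c l = 0" using ind e \<open>l < n\<close> e'e unfolding lin_indep_on_def bij_betw_def by force
    qed
  next
    assume inj: "\<forall>c. (\<forall>i<n. (\<Sum>l<n. w (e l) i * c l) = 0) \<longrightarrow> (\<forall>l<n. c l = 0)"
    show "lin_indep_on n w F" unfolding lin_indep_on_def
    proof (intro allI impI ballI)
      fix l v assume "lin_rel n w F l" "v \<in> F"
      then have "\<forall>k<n. l (e k) = 0" using inj[rule_format, of "l \<circ> e"] unfolding rel by simp
      moreover obtain k where "k < n" "v = e k" using e \<open>v \<in> F\<close> unfolding bij_betw_def by auto
      ultimately show "l v = 0" by simp
    qed
  qed
qed

lemma spans_if_lin_indep_on:
  fixes w :: "'v \<Rightarrow> nat \<Rightarrow> 'a::field"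
  assumes e: "bij_betw e {..<n} F" and ind: "lin_indep_on n w F"
  shows "\<exists>c. is_combination n w F c x"
proof -
  define P where "P = (\<lambda>i l. w (e l) i)"
  obtain Q where Q: "\<forall>i<n. \<forall>k<n. (\<Sum>l<n. P i l * Q l k) = (if i = k then 1 else 0)"
    using matrix_inverse_if_injective[of n P] ind unfolding lin_indep_on_iff_columns[OF e] P_def
    by blast
  define e' where "e' = the_inv_into {..<n} e"
  have e'e: "l < n \<Longrightarrow> e' (e l) = l" for l
    unfolding e'_def using e by (simp add: bij_betw_def the_inv_into_f_f)
  define c where "c = (\<lambda>v. \<Sum>k<n. Q (e' v) k * x k)"
  have "x i = (\<Sum>v\<in>F. c v * w v i)" if "i < n" for i
  proof -
    have "(\<Sum>v\<in>F. c v * w v i) = (\<Sum>l<n. c (e l) * w (e l) i)"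
      using sum.reindex_bij_betw[OF e, of "\<lambda>v. c v * w v i"] by simp
    also have "\<dots> = (\<Sum>l<n. P i l * (\<Sum>k<n. Q l k * x k))"
      unfolding c_def P_def by (intro sum.cong) (simp_all add: e'e mult.commute)
    also have "\<dots> = (\<Sum>k<n. (\<Sum>l<n. P i l * Q l k) * x k)"
      by (simp add: sum_distrib_left sum_distrib_right mult.assoc) (rule sum.swap)
    also have "\<dots> = (\<Sum>k<n. if i = k then x k else 0)" using Q \<open>i < n\<close> by (intro sum.cong) auto
    also have "\<dots> = x i" using \<open>i < n\<close> by simp
    finally show ?thesis by simp
  qed
  then show ?thesis unfolding is_combination_def by blast
qed

lemma lin_indep_on_if_spans:
  fixes w :: "'v \<Rightarrow> nat \<Rightarrow> 'a::field"
  assumes e: "bij_betw e {..<n} F"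
    and spans: "\<forall>k<n. \<exists>d. is_combination n w F d (\<lambda>i. if i = k then 1 else 0)"
  shows "lin_indep_on n w F"
proof -
  obtain d where d: "\<forall>k<n. \<forall>i<n. (if i = k then 1 else 0) = (\<Sum>v\<in>F. d k v * w v i)"
    using spans unfolding is_combination_def by metis
  define P where "P = (\<lambda>i l. w (e l) i)"
  have "\<forall>i<n. \<forall>k<n. (\<Sum>l<n. P i l * d k (e l)) = (if i = k then 1 else 0)"
    using d unfolding P_def sum.reindex_bij_betw[OF e, symmetric] by (simp add: mult.commute)
  from matrix_left_inverse_if_right_inverse[OF this]
  have inv: "\<forall>i<n. \<forall>k<n. (\<Sum>l<n. d l (e i) * P l k) = (if i = k then 1 else 0)" .
  show ?thesis unfolding lin_indep_on_iff_columns[OF e]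
  proof (intro allI impI)
    fix c k assume c: "\<forall>i<n. (\<Sum>l<n. w (e l) i * c l) = 0" and "k < n"
    have "(\<Sum>l<n. (if k = l then 1 else 0) * c l) = (\<Sum>l<n. if k = l then c l else 0)"
      by (rule sum.cong) auto
    then have "c k = (\<Sum>l<n. (if k = l then 1 else 0) * c l)" using \<open>k < n\<close> by simp
    also have "\<dots> = (\<Sum>l<n. (\<Sum>i<n. d i (e k) * P i l) * c l)"
      using inv \<open>k < n\<close> by (intro sum.cong) auto
    also have "\<dots> = (\<Sum>i<n. d i (e k) * (\<Sum>l<n. P i l * c l))"
      by (simp add: sum_distrib_left sum_distrib_right mult.assoc) (rule sum.swap)
    also have "\<dots> = 0" using c unfolding P_def by simp
    finally show "c k = 0" .
  qed
qed

lemma is_combination_self: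
  assumes "v \<in> F" "finite F"
  shows "is_combination n w F (\<lambda>u. if u = v then 1 else 0) (w v)"
proof -
  have "(\<Sum>u\<in>F. (if u = v then 1 else 0) * w u i) = (\<Sum>u\<in>F. if u = v then w u i else 0)" for i
    by (rule sum.cong) auto
  then show "is_combination n w F (\<lambda>u. if u = v then 1 else 0) (w v)"
    unfolding is_combination_def using assms by simp
qed

lemma is_combination_cong:
  "is_combination n w F c x \<Longrightarrow> (\<And>u. u \<in> F \<Longrightarrow> c u = c' u) \<Longrightarrow> is_combination n w F c' x"
  unfolding is_combination_def by simp

lemma transformed_from_standard_basis:
  assumes e: "bij_betw e {..<n} F"
    and std: "\<forall>l<n. \<forall>i<n. w' (e l) i = (if i = l then 1 else 0)"
    and c: "is_combination n w F c (w v)" "is_combination n w' F c (w' v)"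
  shows "\<forall>i<n. w v i = (\<Sum>l<n. w (e l) i * w' v l)"
proof (intro allI impI)
  fix i assume "i < n"
  have w'v: "w' v l = c (e l)" if "l < n" for l
  proof -
    have "w' v l = (\<Sum>k<n. c (e k) * w' (e k) l)"
      using c(2) that sum.reindex_bij_betw[OF e, of "\<lambda>u. c u * w' u l"] unfolding is_combination_def by simp
    also have "\<dots> = (\<Sum>k<n. if k = l then c (e k) else 0)" using std that by (intro sum.cong) auto
    finally show ?thesis using that by simp
  qed
  have "w v i = (\<Sum>u\<in>F. c u * w u i)" using c(1) \<open>i < n\<close> unfolding is_combination_def by simp
  also have "\<dots> = (\<Sum>l<n. c (e l) * w (e l) i)" using sum.reindex_bij_betw[OF e, of "\<lambda>u. c u * w u i"] by simp
  also have "\<dots> = (\<Sum>l<n. w (e l) i * w' v l)" using w'v by (simp add: mult.commute)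
  finally show "w v i = (\<Sum>l<n. w (e l) i * w' v l)" .
qed

section \<open>Gale duality for a basis plus three vectors\<close>

definition basic_relation :: "'v set \<Rightarrow> 'v \<Rightarrow> ('v \<Rightarrow> 'a::comm_ring_1) \<Rightarrow> 'v \<Rightarrow> 'a" where
  "basic_relation F r c v = (if v = r then 1 else 0) - (if v \<in> F then c v else 0)"

locale basis_plus_three =
  fixes V F :: "'v set" and r1 r2 r3 :: 'v
  assumes V_eq: "V = insert r1 (insert r2 (insert r3 F))" and finite_F: "finite F"
    and notin_F: "r1 \<notin> F" "r2 \<notin> F" "r3 \<notin> F"
    and distinct: "r1 \<noteq> r2" "r1 \<noteq> r3" "r2 \<noteq> r3"
begin

lemma finite_V: "finite V"
  using V_eq finite_F by simp

lemma sum_V: "(\<Sum>v\<in>V. f v) = f r1 + f r2 + f r3 + (\<Sum>v\<in>F. f v)"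
  using V_eq finite_F notin_F distinct by (simp add: add.assoc)

definition gale_vector :: "('v \<Rightarrow> 'a::comm_ring_1) \<Rightarrow> ('v \<Rightarrow> 'a) \<Rightarrow> ('v \<Rightarrow> 'a) \<Rightarrow> 'v \<Rightarrow> 'a \<times> 'a \<times> 'a" where
  "gale_vector c1 c2 c3 v = (basic_relation F r1 c1 v, basic_relation F r2 c2 v, basic_relation F r3 c3 v)"

lemma gale_vector_r:
  "gale_vector c1 c2 c3 r1 = (1,0,0)" "gale_vector c1 c2 c3 r2 = (0,1,0)" "gale_vector c1 c2 c3 r3 = (0,0,1)"
  unfolding gale_vector_def basic_relation_def using notin_F distinct by auto

lemma gale_vector_F: "v \<in> F \<Longrightarrow> gale_vector c1 c2 c3 v = (- c1 v, - c2 v, - c3 v)"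
  unfolding gale_vector_def basic_relation_def using notin_F by auto

lemma lin_rel_basic_relation:
  assumes "r \<in> {r1,r2,r3}" "is_combination n w F c (w r)"
  shows "lin_rel n w V (basic_relation F r c)"
  unfolding lin_rel_def
proof (intro allI impI)
  fix i assume "i < n"
  have "r \<notin> F" using assms(1) notin_F by auto
  then have "(\<Sum>v\<in>F. basic_relation F r c v * w v i) = - (\<Sum>v\<in>F. c v * w v i)"
    unfolding basic_relation_def by (auto simp: sum_negf[symmetric] intro: sum.cong)
  moreover have "(\<Sum>v\<in>{r1,r2,r3}. basic_relation F r c v * w v i) = w r i"
    using assms(1) notin_F distinct unfolding basic_relation_def by auto
  ultimately show "(\<Sum>v\<in>V. basic_relation F r c v * w v i) = 0"
    using assms(2) \<open>i < n\<close> notin_F distinct unfolding sum_V is_combination_def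
    by (simp add: add.assoc)
qed

lemma dot3_gale_vector_r:
  "(dot3 p (gale_vector c1 c2 c3 r1), dot3 p (gale_vector c1 c2 c3 r2), dot3 p (gale_vector c1 c2 c3 r3)) = p"
  by (cases p) (simp add: gale_vector_r)

lemma lin_rel_complement_iff:
  assumes "l x = 0" "l y = 0" "l z = 0"
  shows "lin_rel n w (V - {x,y,z}) l \<longleftrightarrow> lin_rel n w V l"
proof -
  have "(\<Sum>v\<in>V. l v * w v i) = (\<Sum>v\<in>V - {x,y,z}. l v * w v i)" for i
    using assms finite_V by (intro sum.mono_neutral_cong_right) auto
  then show ?thesis unfolding lin_rel_def by simp
qed

context
  fixes n :: nat and w :: "'v \<Rightarrow> nat \<Rightarrow> 'a::field" and c1 c2 c3 :: "'v \<Rightarrow> 'a"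
  assumes c1: "is_combination n w F c1 (w r1)"
    and c2: "is_combination n w F c2 (w r2)"
    and c3: "is_combination n w F c3 (w r3)"
begin

lemma lin_rel_gale_dual:
  "lin_rel n w V (\<lambda>v. dot3 p (gale_vector c1 c2 c3 v))"
proof -
  obtain p1 p2 p3 where p: "p = (p1,p2,p3)" by (cases p)
  have "lin_rel n w V (\<lambda>v. p1 * basic_relation F r1 c1 v + p2 * basic_relation F r2 c2 v)"
    by (intro lin_rel_lincomb lin_rel_basic_relation c1 c2) simp_all
  from lin_rel_lincomb[OF this lin_rel_basic_relation[OF _ c3], of 1 p3]
  show ?thesis unfolding p gale_vector_def by simp
qed

lemma lin_rel_eq_gale_dual:
  assumes ind: "lin_indep_on n w F" and l: "lin_rel n w V l" and "v \<in> V"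
  shows "l v = dot3 (l r1, l r2, l r3) (gale_vector c1 c2 c3 v)"
proof -
  define L where "L = (\<lambda>v. 1 * l v + (- 1) * dot3 (l r1, l r2, l r3) (gale_vector c1 c2 c3 v))"
  have "lin_rel n w V L" unfolding L_def by (intro lin_rel_lincomb l lin_rel_gale_dual)
  moreover have L_r: "L r1 = 0" "L r2 = 0" "L r3 = 0" unfolding L_def gale_vector_r by simp_all
  ultimately have "lin_rel n w F L" unfolding lin_rel_def sum_V by simp
  then have "\<forall>u\<in>F. L u = 0" using ind unfolding lin_indep_on_def by blast
  then have "L v = 0" using L_r \<open>v \<in> V\<close> V_eq by auto
  then show ?thesis unfolding L_def by simp
qed

lemma gale_annihilator_trivial_if_lin_indep_complement:
  assumes indS: "lin_indep_on n w (V - {x,y,z})"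
    and p: "dot3 p (gale_vector c1 c2 c3 x) = 0" "dot3 p (gale_vector c1 c2 c3 y) = 0"
      "dot3 p (gale_vector c1 c2 c3 z) = 0"
  shows "p = (0,0,0)"
proof -
  define l where "l v = dot3 p (gale_vector c1 c2 c3 v)" for v
  have "lin_rel n w (V - {x,y,z}) l"
    using lin_rel_complement_iff[of l] p lin_rel_gale_dual unfolding l_def by simp
  then have "\<forall>v\<in>V - {x,y,z}. l v = 0" using indS unfolding lin_indep_on_def by blast
  then have "l r1 = 0" "l r2 = 0" "l r3 = 0" using p V_eq unfolding l_def by auto
  then show ?thesis using dot3_gale_vector_r[of p c1 c2 c3] unfolding l_def by simp
qed

lemma lin_indep_complement_if_gale_annihilator_trivial:
  assumes ind: "lin_indep_on n w F" and xyz: "x \<in> V" "y \<in> V" "z \<in> V"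
    and H: "\<forall>p. dot3 p (gale_vector c1 c2 c3 x) = 0 \<and> dot3 p (gale_vector c1 c2 c3 y) = 0 \<and>
      dot3 p (gale_vector c1 c2 c3 z) = 0 \<longrightarrow> p = (0,0,0)"
  shows "lin_indep_on n w (V - {x,y,z})"
  unfolding lin_indep_on_def
proof (intro allI impI ballI)
  fix l v assume rel: "lin_rel n w (V - {x,y,z}) l" and v: "v \<in> V - {x,y,z}"
  define l' where "l' = (\<lambda>v. if v \<in> V - {x,y,z} then l v else 0)"
  have "lin_rel n w V l'"
    using lin_rel_extend_zero[OF finite_V Diff_subset] rel unfolding l'_def by blast
  then have l'_eq: "l' u = dot3 (l' r1, l' r2, l' r3) (gale_vector c1 c2 c3 u)" if "u \<in> V" for u
    using lin_rel_eq_gale_dual[OF ind _ that] by blast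
  have "l' x = 0" "l' y = 0" "l' z = 0" unfolding l'_def by auto
  then have "(l' r1, l' r2, l' r3) = (0,0,0)" using H l'_eq xyz by metis
  then show "l v = 0" using l'_eq[of v] v unfolding l'_def by auto
qed

theorem lin_indep_on_complement_iff:
  assumes "lin_indep_on n w F" "x \<in> V" "y \<in> V" "z \<in> V"
  shows "lin_indep_on n w (V - {x,y,z}) \<longleftrightarrow>
    (\<forall>p. dot3 p (gale_vector c1 c2 c3 x) = 0 \<and> dot3 p (gale_vector c1 c2 c3 y) = 0 \<and>
       dot3 p (gale_vector c1 c2 c3 z) = 0 \<longrightarrow> p = (0,0,0))"
  using gale_annihilator_trivial_if_lin_indep_complement lin_indep_complement_if_gale_annihilator_trivial[OF assms]
  by blast

end

end

section \<open>Triangles of the heptagon containing the centre\<close>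

definition centred_triples :: "(nat \<times> nat \<times> nat) set" where
  "centred_triples = {(1,2,5),(1,3,5),(1,3,6),(1,4,5),(1,4,6),(1,4,7),(2,3,6),(2,4,6),(2,4,7),
              (2,5,6),(2,5,7),(3,4,7),(3,5,7),(3,6,7)}"

lemma centred_triplesD:
  "(i,j,k) \<in> centred_triples \<Longrightarrow> i < j \<and> j < k \<and> i \<in> {1..7} \<and> j \<in> {1..7} \<and> k \<in> {1..7}"
  unfolding centred_triples_def by auto

lemma zero_in_convex_hull_3:
  fixes p q r :: "'a::real_vector"
  assumes "s1 > 0" "s2 > 0" "s3 > 0" "s1 *\<^sub>R p + s2 *\<^sub>R q + s3 *\<^sub>R r = 0"
  shows "0 \<in> convex hull {p, q, r}"
proof -
  define s where "s = s1 + s2 + s3"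
  have "s > 0" using assms unfolding s_def by simp
  have "(s1/s) *\<^sub>R p + (s2/s) *\<^sub>R q + (s3/s) *\<^sub>R r = (1/s) *\<^sub>R (s1 *\<^sub>R p + s2 *\<^sub>R q + s3 *\<^sub>R r)"
    by (simp add: scaleR_add_right)
  then have "(s1/s) *\<^sub>R p + (s2/s) *\<^sub>R q + (s3/s) *\<^sub>R r = 0" using assms(4) by simp
  moreover have "s1/s + s2/s + s3/s = 1" using \<open>s > 0\<close> by (simp add: add_divide_distrib[symmetric] s_def)
  ultimately show ?thesis unfolding convex_hull_3 using assms \<open>s > 0\<close>
    by (intro CollectI exI[of _ "s1/s"] exI[of _ "s2/s"] exI[of _ "s3/s"]) auto
qed

lemma sin_diff_cis_relation:
  "sin (C - B) *\<^sub>R cis A + sin (A - C) *\<^sub>R cis B + sin (B - A) *\<^sub>R cis C = 0"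
  by (simp add: complex_eq_iff sin_diff algebra_simps)

lemma zero_in_convex_hull_hept_vert:
  assumes "x < y" "y < z" "y - x \<le> 3" "z - y \<le> 3" "z - x \<ge> 4" "z - x \<le> 6"
  shows "0 \<in> convex hull {hept_vert x, hept_vert y, hept_vert z}"
proof -
  have sin_pos: "sin (2 * pi * real k / 7) > 0" if "1 \<le> k" "k \<le> 3" for k :: nat
    using that by (intro sin_gt_zero) auto
  have sin_neg: "sin (2 * pi * real k / 7) < 0" if "4 \<le> k" "k \<le> 6" for k :: nat
    using that by (intro sin_lt_zero) auto
  define A B C where "A = 2 * pi * real x / 7" and "B = 2 * pi * real y / 7" and "C = 2 * pi * real z / 7"
  have diffs: "C - B = 2 * pi * real (z - y) / 7" "B - A = 2 * pi * real (y - x) / 7"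
    "C - A = 2 * pi * real (z - x) / 7"
    unfolding A_def B_def C_def using assms by (simp_all add: of_nat_diff field_simps)
  have "sin (C - B) > 0" "sin (B - A) > 0" "sin (C - A) < 0"
    unfolding diffs using assms by (intro sin_pos sin_neg; simp)+
  moreover have "sin (A - C) = - sin (C - A)" by (simp add: sin_diff algebra_simps)
  ultimately show ?thesis
    using zero_in_convex_hull_3[OF _ _ _ sin_diff_cis_relation[of C B A]]
    unfolding hept_vert_def A_def B_def C_def by simp
qed

lemma zero_in_convex_hull_centred_triple:
  "(x,y,z) \<in> centred_triples \<Longrightarrow> 0 \<in> convex hull {hept_vert x, hept_vert y, hept_vert z}"
  unfolding centred_triples_def by (auto intro!: zero_in_convex_hull_hept_vert)

text \<open>Four consecutive vertices \<open>k, \<dots>, k + 3\<close> (mod 7) lie in the open half-plane with inner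
  normal at angle \<open>\<pi> (2 k + 3) / 7\<close>.\<close>

lemma inner_hept_vert_pos:
  assumes "k \<in> {1..7}" "j \<in> {1..7}" "(j + 7 - k) mod 7 < 4"
  shows "inner (cis (pi * (2 * real k + 3) / 7)) (hept_vert j) > 0"
proof -
  define q where "q = (j + 7 - k) mod 7"
  have "q < 4" using assms(3) unfolding q_def .
  have "cos (pi * (3 - 2 * real q) / 7) > 0"
  proof (rule cos_gt_zero_pi)
    have "pi * (3 - 2 * real q) / 7 \<le> pi * 3 / 7" by (intro divide_right_mono mult_left_mono) auto
    then show "pi * (3 - 2 * real q) / 7 < pi / 2" using pi_gt_zero by linarith
    show "- (pi / 2) < pi * (3 - 2 * real q) / 7" using \<open>q < 4\<close> pi_gt_zero by (simp add: field_simps)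
  qed
  moreover have "k \<in> {1,2,3,4,5,6,7}" "j \<in> {1,2,3,4,5,6,7}" using assms(1,2) by auto
  then have "j = k + q \<or> j + 7 = k + q" unfolding q_def by auto
  then have "cos (pi * (2 * real k + 3) / 7 - 2 * pi * real j / 7) = cos (pi * (3 - 2 * real q) / 7)"
  proof
    assume "j = k + q"
    then have j: "real j = real k + real q" by simp
    have "pi * (2 * real k + 3) / 7 - 2 * pi * real j / 7 = pi * (3 - 2 * real q) / 7"
      unfolding j by (simp add: field_simps)
    then show ?thesis by (simp only:)
  next
    assume "j + 7 = k + q"
    then have j: "real j = real k + real q - 7" by linarith
    have "pi * (2 * real k + 3) / 7 - 2 * pi * real j / 7 = pi * (3 - 2 * real q) / 7 + 2 * pi"
      unfolding j by (simp add: field_simps)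
    then show ?thesis by (simp add: cos_periodic)
  qed
  ultimately show ?thesis unfolding hept_vert_def by (simp add: inner_complex_def cos_diff)
qed

lemma no_centred_triple_imp_four_consecutive:
  "\<not>(b1\<and>b2\<and>b5) \<Longrightarrow> \<not>(b1\<and>b3\<and>b5) \<Longrightarrow> \<not>(b1\<and>b3\<and>b6) \<Longrightarrow> \<not>(b1\<and>b4\<and>b5) \<Longrightarrow>
   \<not>(b1\<and>b4\<and>b6) \<Longrightarrow> \<not>(b1\<and>b4\<and>b7) \<Longrightarrow> \<not>(b2\<and>b3\<and>b6) \<Longrightarrow> \<not>(b2\<and>b4\<and>b6) \<Longrightarrow>
   \<not>(b2\<and>b4\<and>b7) \<Longrightarrow> \<not>(b2\<and>b5\<and>b6) \<Longrightarrow> \<not>(b2\<and>b5\<and>b7) \<Longrightarrow> \<not>(b3\<and>b4\<and>b7) \<Longrightarrow>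
   \<not>(b3\<and>b5\<and>b7) \<Longrightarrow> \<not>(b3\<and>b6\<and>b7) \<Longrightarrow>
   (\<not>b5\<and>\<not>b6\<and>\<not>b7) \<or> (\<not>b6\<and>\<not>b7\<and>\<not>b1) \<or> (\<not>b7\<and>\<not>b1\<and>\<not>b2) \<or> (\<not>b1\<and>\<not>b2\<and>\<not>b3) \<or>
   (\<not>b2\<and>\<not>b3\<and>\<not>b4) \<or> (\<not>b3\<and>\<not>b4\<and>\<not>b5) \<or> (\<not>b4\<and>\<not>b5\<and>\<not>b6)"
  by (cases b1; cases b2; cases b3; cases b4; cases b5; cases b6; cases b7) simp_all

lemma zero_in_convex_hull_iff_centred_triple:
  assumes S: "S \<subseteq> {1..7}"
  shows "0 \<in> convex hull (hept_vert ` S) \<longleftrightarrow> (\<exists>(x,y,z)\<in>centred_triples. x \<in> S \<and> y \<in> S \<and> z \<in> S)"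
proof
  assume "\<exists>(x,y,z)\<in>centred_triples. x \<in> S \<and> y \<in> S \<and> z \<in> S"
  then obtain x y z where "(x,y,z) \<in> centred_triples" "{hept_vert x, hept_vert y, hept_vert z} \<subseteq> hept_vert ` S"
    by auto
  then show "0 \<in> convex hull (hept_vert ` S)"
    using zero_in_convex_hull_centred_triple hull_mono by blast
next
  assume zero: "0 \<in> convex hull (hept_vert ` S)"
  show "\<exists>(x,y,z)\<in>centred_triples. x \<in> S \<and> y \<in> S \<and> z \<in> S"
  proof (rule ccontr)
    assume "\<not> ?thesis"
    then have "(5\<notin>S\<and>6\<notin>S\<and>7\<notin>S) \<or> (6\<notin>S\<and>7\<notin>S\<and>1\<notin>S) \<or> (7\<notin>S\<and>1\<notin>S\<and>2\<notin>S) \<or>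
      (1\<notin>S\<and>2\<notin>S\<and>3\<notin>S) \<or> (2\<notin>S\<and>3\<notin>S\<and>4\<notin>S) \<or> (3\<notin>S\<and>4\<notin>S\<and>5\<notin>S) \<or> (4\<notin>S\<and>5\<notin>S\<and>6\<notin>S)"
      by (intro no_centred_triple_imp_four_consecutive) (auto simp: centred_triples_def)
    moreover have S7: "j \<in> S \<Longrightarrow> j = 1 \<or> j = 2 \<or> j = 3 \<or> j = 4 \<or> j = 5 \<or> j = 6 \<or> j = 7" for j
      using S by auto
    ultimately have "\<exists>k\<in>{1..7}. \<forall>j\<in>S. (j + 7 - k) mod 7 < 4"
      apply (elim disjE)
      subgoal by (intro bexI[of _ 1]) (use S7 in fastforce)+
      subgoal by (intro bexI[of _ 2]) (use S7 in fastforce)+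
      subgoal by (intro bexI[of _ 3]) (use S7 in fastforce)+
      subgoal by (intro bexI[of _ 4]) (use S7 in fastforce)+
      subgoal by (intro bexI[of _ 5]) (use S7 in fastforce)+
      subgoal by (intro bexI[of _ 6]) (use S7 in fastforce)+
      subgoal by (intro bexI[of _ 7]) (use S7 in fastforce)+
      done
    then obtain k where k: "k \<in> {1..7}" "\<forall>j\<in>S. (j + 7 - k) mod 7 < 4" ..
    let ?d = "cis (pi * (2 * real k + 3) / 7)"
    have "convex hull (hept_vert ` S) \<subseteq> {x. inner ?d x > 0}"
      using k S inner_hept_vert_pos by (intro hull_minimal) (auto intro: convex_halfspace_gt)
    then show False using zero by auto
  qed
qed

definition centred_unimodular :: "(nat \<Rightarrow> 'a::comm_ring_1 \<times> 'a \<times> 'a) \<Rightarrow> bool" where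
  "centred_unimodular g \<longleftrightarrow> (\<forall>(x,y,z)\<in>centred_triples. det3 (g x) (g y) (g z) = 1)"

lemma centred_unimodular_iff:
  "centred_unimodular g \<longleftrightarrow>
    det3 (g 1) (g 2) (g 5) = 1 \<and> det3 (g 1) (g 3) (g 5) = 1 \<and> det3 (g 1) (g 3) (g 6) = 1 \<and>
    det3 (g 1) (g 4) (g 5) = 1 \<and> det3 (g 1) (g 4) (g 6) = 1 \<and> det3 (g 1) (g 4) (g 7) = 1 \<and>
    det3 (g 2) (g 3) (g 6) = 1 \<and> det3 (g 2) (g 4) (g 6) = 1 \<and> det3 (g 2) (g 4) (g 7) = 1 \<and>
    det3 (g 2) (g 5) (g 6) = 1 \<and> det3 (g 2) (g 5) (g 7) = 1 \<and> det3 (g 3) (g 4) (g 7) = 1 \<and>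
    det3 (g 3) (g 5) (g 7) = 1 \<and> det3 (g 3) (g 6) (g 7) = 1"
  unfolding centred_unimodular_def centred_triples_def by simp

text \<open>Normalising \<open>g 1, g 2, g 5\<close> to the standard basis leaves exactly two solutions over \<open>\<int>\<^sub>2\<close>.\<close>

definition bit_gale_solution :: "bool \<Rightarrow> nat \<Rightarrow> bit \<times> bit \<times> bit" where
  "bit_gale_solution k i = (if i = 1 then (1,0,0) else if i = 2 then (0,1,0) else if i = 5 then (0,0,1)
     else if i = 3 then (if k then (0,1,1) else (1,1,1))
     else if i = 4 then (if k then (1,1,0) else (0,1,1))
     else if i = 6 then (if k then (1,0,1) else (1,1,0))
     else (if k then (1,1,1) else (1,0,1)))"

lemma bit_gale_solution_simps:
  "bit_gale_solution k 1 = (1,0,0)" "bit_gale_solution k (Suc 0) = (1,0,0)"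
  "bit_gale_solution k 2 = (0,1,0)" "bit_gale_solution k 5 = (0,0,1)"
  "bit_gale_solution True 3 = (0,1,1)" "bit_gale_solution True 4 = (1,1,0)"
  "bit_gale_solution True 6 = (1,0,1)" "bit_gale_solution True 7 = (1,1,1)"
  "bit_gale_solution False 3 = (1,1,1)" "bit_gale_solution False 4 = (0,1,1)"
  "bit_gale_solution False 6 = (1,1,0)" "bit_gale_solution False 7 = (1,0,1)"
  by (simp_all add: bit_gale_solution_def)

lemma bit_all: "(\<forall>x::bit. P x) \<longleftrightarrow> P 0 \<and> P 1"
  by (metis bit_not_zero_iff)

lemma det3_bit_eq_1_iff:
  fixes x y z :: "bit \<times> bit \<times> bit"
  shows "det3 x y z = 1 \<longleftrightarrow> (\<forall>p. dot3 p x = 0 \<and> dot3 p y = 0 \<and> dot3 p z = 0 \<longrightarrow> p = (0,0,0))"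
proof -
  have "\<forall>x1 x2 x3 y1 y2 y3 z1 z2 z3 :: bit. det3 (x1,x2,x3) (y1,y2,y3) (z1,z2,z3) = 1 \<longleftrightarrow>
    (\<forall>p1 p2 p3. dot3 (p1,p2,p3) (x1,x2,x3) = 0 \<and> dot3 (p1,p2,p3) (y1,y2,y3) = 0 \<and>
       dot3 (p1,p2,p3) (z1,z2,z3) = 0 \<longrightarrow> (p1,p2,p3) = (0,0,0))"
    unfolding bit_all by simp
  then show ?thesis by (cases x; cases y; cases z) auto
qed

lemma bit_gale_solution_unimodular: "centred_unimodular (bit_gale_solution k)"
  unfolding centred_unimodular_iff by (cases k) (simp_all add: bit_gale_solution_simps)

lemma bit_gale_solution_singular: "det3 (bit_gale_solution True 1) (bit_gale_solution True 2) (bit_gale_solution True 4) = 0"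
  and bit_gale_solution_nonsingular: "det3 (bit_gale_solution False 1) (bit_gale_solution False 2) (bit_gale_solution False 4) = 1"
  by (simp_all add: bit_gale_solution_simps)

lemma bit_centred_unimodular_cases:
  fixes g :: "nat \<Rightarrow> bit \<times> bit \<times> bit"
  assumes g: "centred_unimodular g" "g 1 = (1,0,0)" "g 2 = (0,1,0)" "g 5 = (0,0,1)"
  shows "\<exists>k. \<forall>i\<in>{1..7}. g i = bit_gale_solution k i"
proof -
  obtain a1 a2 a3 b1 b2 b3 c1 c2 c3 d1 d2 d3 where
    abcd: "g 3 = (a1,a2,a3)" "g 4 = (b1,b2,b3)" "g 6 = (c1,c2,c3)" "g 7 = (d1,d2,d3)"
    by (metis prod.exhaust)
  have dets: "det3 (g 1) (g 3) (g 5) = 1" "det3 (g 1) (g 4) (g 5) = 1"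
    "det3 (g 2) (g 5) (g 6) = 1" "det3 (g 2) (g 5) (g 7) = 1"
    using g(1) unfolding centred_unimodular_iff by simp_all
  then have "a2 = 1" "b2 = 1" "c1 = 1" "d1 = 1" using g abcd by simp_all
  moreover have "\<forall>a1 a3 b1 b3 c2 c3 d2 d3 :: bit. centred_unimodular (g(3 := (a1,1,a3), 4 := (b1,1,b3),
      6 := (1,c2,c3), 7 := (1,d2,d3))) \<longrightarrow>
      (\<exists>k. (a1,1,a3) = bit_gale_solution k 3 \<and> (b1,1,b3) = bit_gale_solution k 4 \<and>
         (1,c2,c3) = bit_gale_solution k 6 \<and> (1,d2,d3) = bit_gale_solution k 7)"
    unfolding centred_unimodular_iff bit_all using g(2-4) by (simp add: bit_gale_solution_simps ex_bool_eq)
  ultimately obtain k where k: "\<forall>i\<in>{3,4,6,7}. g i = bit_gale_solution k i"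
    using g(1) abcd by (fastforce simp: fun_upd_idem)
  have "g i = bit_gale_solution k i" if "i \<in> {1..7}" for i
  proof -
    have "i \<in> {1,2,5} \<or> i \<in> {3,4,6,7}" using that by auto
    then show ?thesis using k g(2-4) by (auto simp: bit_gale_solution_simps)
  qed
  then show ?thesis by blast
qed

lemma bit_gale_solution_rigid:
  assumes "i \<in> {1..7}" "centred_unimodular ((bit_gale_solution k)(i := x))"
  shows "x = bit_gale_solution k i"
proof -
  have "i \<in> {1,2,3,4,5,6,7}" using assms(1) by auto
  then have "\<forall>x1 x2 x3. centred_unimodular ((bit_gale_solution k)(i := (x1,x2,x3))) \<longrightarrow>
      (x1,x2,x3) = bit_gale_solution k i"
    unfolding centred_unimodular_iff bit_all by (cases k; auto simp: bit_gale_solution_simps)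
  then show ?thesis using assms(2) by (cases x) blast
qed

lemma no_integer_solution:
  fixes p q r s t u v w :: int
  assumes E1: "u - q * t = 1" and E2: "u - s * t = 1" and E3: "w - s * v = 1"
    and E4: "q - p * u = 1" and E5: "s - r * u = 1" and E6: "s - r * w = 1" and E7: "v * p = 0"
    and E8: "p * (w - s * v) - (r * w - s) + q * (r * v - 1) = 1"
    and E9: "p * (t * w - u * v) - (w - u) + q * (v - t) = 1"
  shows False
proof (cases "p = 0")
  case True
  have q: "q = 1" using E4 True by simp
  have rv: "r * v = 1" using E8 E6 True q by (simp add: algebra_simps)
  have "r * (u - w) = 0" using E5 E6 by (simp add: algebra_simps)
  moreover have "r \<noteq> 0" using rv by auto
  ultimately have uw: "u = w" by simp
  have vt: "v - t = 1" using E9 True uw q by simp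
  have u: "u = 1 + t" using E1 q by simp
  have ts: "t = s * v" using E3 uw u by simp
  have "t * (1 - s) = 0" using E2 u by (simp add: algebra_simps)
  then consider "t = 0" | "s = 1" by auto
  then show False
  proof cases
    case 1
    then have "v = 1" using vt by simp
    then have "s = 0" using ts 1 by simp
    then show False using E5 rv u 1 \<open>v = 1\<close> by simp
  next
    case 2
    then show False using ts vt by simp
  qed
next
  case False
  then have v: "v = 0" using E7 by simp
  have w: "w = 1" using E3 v by simp
  have "p * t + u - 1 - q * t = 1" using E9 v w by (simp add: algebra_simps)
  then have pt: "p * t = 1" using E1 by simp
  then have "t \<noteq> 0" by auto
  moreover have "t * (q - s) = 0" using E1 E2 by (simp add: algebra_simps)
  ultimately have qs: "q = s" by simp
  have sr: "s - r = 1" using E6 w by simp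
  have "p - r + s - q = 1" using E8 v w by (simp add: algebra_simps)
  then have pr: "p - r = 1" using qs by simp
  have "r * (u - 1) = 0" using E5 sr by (simp add: algebra_simps)
  then consider "r = 0" | "u = 1" by auto
  then show False
  proof cases
    case 1
    then have "s = 1" "p = 1" using sr pr by simp_all
    then have "t = 1" "u = 2" using pt E1 qs by simp_all
    then show False using E4 qs \<open>s = 1\<close> \<open>p = 1\<close> by simp
  next
    case 2
    then have "q = 0" using E1 \<open>t \<noteq> 0\<close> by simp
    then show False using E4 2 sr pr qs by simp
  qed
qed

lemma int_centred_unimodular_impossible:
  fixes g :: "nat \<Rightarrow> int \<times> int \<times> int"
  assumes "centred_unimodular g" "g 1 = (1,0,0)" "g 2 = (0,1,0)" "g 5 = (0,0,1)"
  shows False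
proof -
  obtain p p2 q r q2 s r1 t u s1 v w where
    g: "g 3 = (p,p2,q)" "g 4 = (r,q2,s)" "g 6 = (r1,t,u)" "g 7 = (s1,v,w)"
    by (metis prod.exhaust)
  have d: "det3 (g 1) (g 3) (g 5) = 1" "det3 (g 1) (g 3) (g 6) = 1"
    "det3 (g 1) (g 4) (g 5) = 1" "det3 (g 1) (g 4) (g 6) = 1" "det3 (g 1) (g 4) (g 7) = 1"
    "det3 (g 2) (g 3) (g 6) = 1" "det3 (g 2) (g 4) (g 6) = 1" "det3 (g 2) (g 4) (g 7) = 1"
    "det3 (g 2) (g 5) (g 6) = 1" "det3 (g 2) (g 5) (g 7) = 1" "det3 (g 3) (g 4) (g 7) = 1"
    "det3 (g 3) (g 5) (g 7) = 1" "det3 (g 3) (g 6) (g 7) = 1"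
    using assms(1) unfolding centred_unimodular_iff by simp_all
  note e = assms(2-4) g
  have one: "p2 = 1" "q2 = 1" "r1 = 1" "s1 = 1" using d(1,3,9,10) unfolding e by simp_all
  show False
  proof (rule no_integer_solution)
    show "u - q * t = 1" using d(2) one unfolding e by simp
    show "u - s * t = 1" using d(4) one unfolding e by simp
    show "w - s * v = 1" using d(5) one unfolding e by simp
    show "q - p * u = 1" using d(6) one unfolding e by (simp add: algebra_simps)
    show "s - r * u = 1" using d(7) one unfolding e by (simp add: algebra_simps)
    show "s - r * w = 1" using d(8) one unfolding e by (simp add: algebra_simps)
    show "v * p = 0" using d(12) one unfolding e by (simp add: algebra_simps)
    show "p * (w - s * v) - (r * w - s) + q * (r * v - 1) = 1" using d(11) one unfolding e by simp
    show "p * (t * w - u * v) - (w - u) + q * (v - t) = 1" using d(13) one unfolding e by simp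
  qed
qed

lemma finite_hV: "finite (hV a)"
proof -
  have "hV a = (\<Union>i\<in>{1..7}. {i} \<times> {..<a i})" unfolding hV_def by auto
  then show ?thesis by simp
qed

locale heptagon_complex =
  fixes a :: "nat \<Rightarrow> nat"
  assumes pos: "\<forall>i\<in>{1..7}. a i > 0"
begin

abbreviation "V \<equiv> hV a"
abbreviation "n \<equiv> hdim a"

lemma base_point_in_V: "i \<in> {1..7} \<Longrightarrow> (i,0) \<in> V"
  using pos unfolding hV_def by auto

lemma fst_in_V: "v \<in> V \<Longrightarrow> fst v \<in> {1..7}"
  unfolding hV_def by auto

lemma ex_triple_in_image_fst:
  "(\<exists>(i,j,k)\<in>C. i \<in> fst ` A \<and> j \<in> fst ` A \<and> k \<in> fst ` A) \<longleftrightarrow>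
     (\<exists>x\<in>A. \<exists>y\<in>A. \<exists>z\<in>A. (fst x, fst y, fst z) \<in> C)"
proof
  assume "\<exists>(i,j,k)\<in>C. i \<in> fst ` A \<and> j \<in> fst ` A \<and> k \<in> fst ` A"
  then obtain x y z where "x \<in> A" "y \<in> A" "z \<in> A" "(fst x, fst y, fst z) \<in> C" by auto
  then show "\<exists>x\<in>A. \<exists>y\<in>A. \<exists>z\<in>A. (fst x, fst y, fst z) \<in> C" by blast
next
  assume "\<exists>x\<in>A. \<exists>y\<in>A. \<exists>z\<in>A. (fst x, fst y, fst z) \<in> C"
  then obtain x y z where "x \<in> A" "y \<in> A" "z \<in> A" "(fst x, fst y, fst z) \<in> C" by blast
  then show "\<exists>(i,j,k)\<in>C. i \<in> fst ` A \<and> j \<in> fst ` A \<and> k \<in> fst ` A" by (intro bexI[of _ "(fst x, fst y, fst z)"]) auto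
qed

lemma hface_iff:
  "hface a I \<longleftrightarrow> I \<subseteq> V \<and> (\<exists>x\<in>V-I. \<exists>y\<in>V-I. \<exists>z\<in>V-I. (fst x, fst y, fst z) \<in> centred_triples)"
proof -
  have image: "hphi ` (V - I) = hept_vert ` (fst ` (V - I))" unfolding hphi_def by (simp add: image_image)
  have "fst ` (V - I) \<subseteq> {1..7}" using fst_in_V by auto
  from zero_in_convex_hull_iff_centred_triple[OF this]
  show ?thesis unfolding hface_def image ex_triple_in_image_fst by (simp only:)
qed

lemma hface_complement_triple:
  assumes "x \<in> V" "y \<in> V" "z \<in> V" "(fst x, fst y, fst z) \<in> centred_triples"
  shows "hface a (V - {x,y,z})" "card (V - {x,y,z}) = n"
proof -
  have "x \<in> V - (V - {x,y,z})" "y \<in> V - (V - {x,y,z})" "z \<in> V - (V - {x,y,z})" using assms by auto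
  then show "hface a (V - {x,y,z})" unfolding hface_iff using assms(4) by blast
  have "x \<noteq> y" "x \<noteq> z" "y \<noteq> z" using centred_triplesD[OF assms(4)] by auto
  then show "card (V - {x,y,z}) = n" unfolding hdim_def using assms finite_hV by (simp add: card_Diff_subset)
qed

abbreviation "r1 \<equiv> (1::nat, 0::nat)"
abbreviation "r2 \<equiv> (2::nat, 0::nat)"
abbreviation "r5 \<equiv> (5::nat, 0::nat)"

definition F0 :: "(nat \<times> nat) set" where "F0 = V - {r1, r2, r5}"

lemma r_in_V: "r1 \<in> V" "r2 \<in> V" "r5 \<in> V"
  using base_point_in_V by auto

lemma F0_hface: "hface a F0" and card_F0: "card F0 = n"
  unfolding F0_def using hface_complement_triple[OF r_in_V] by (auto simp: centred_triples_def)

sublocale basis_plus_three V F0 r1 r2 r5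
  using r_in_V finite_hV unfolding F0_def by unfold_locales auto

definition F0_enum :: "nat \<Rightarrow> nat \<times> nat" where
  "F0_enum = (SOME e. bij_betw e {..<n} F0)"

lemma bij_betw_F0_enum: "bij_betw F0_enum {..<n} F0"
proof -
  have "\<exists>e. bij_betw e {..<n} F0"
    using ex_bij_betw_nat_finite[OF finite_F] card_F0 by (metis lessThan_atLeast0)
  then show ?thesis unfolding F0_enum_def by (rule someI_ex)
qed

lemma F0_enum_in_F0: "l < n \<Longrightarrow> F0_enum l \<in> F0"
  using bij_betw_F0_enum unfolding bij_betw_def by auto

lemma F0_enum_inj: "l < n \<Longrightarrow> i < n \<Longrightarrow> F0_enum i = F0_enum l \<longleftrightarrow> i = l"
  using bij_betw_F0_enum unfolding bij_betw_def inj_on_def by auto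

lemma lin_indep_F0_if_char_map: "char_map_Z2 a lam \<Longrightarrow> lin_indep_on n lam F0"
  using F0_hface unfolding char_map_Z2_def lin_indep_Z2_iff by blast

lemma GL_Z2_if_lin_indep_F0:
  assumes "lin_indep_on n lam F0"
  shows "GL_Z2 n (\<lambda>i l. lam (F0_enum l) i)"
  using matrix_inverse_if_injective[of n "\<lambda>i l. lam (F0_enum l) i"] assms
  unfolding lin_indep_on_iff_columns[OF bij_betw_F0_enum] GL_Z2_def by blast

section \<open>Small covers over \<open>[a\<^sub>1, \<dots>, a\<^sub>7]\<close>\<close>

definition gale_coord :: "nat \<times> nat \<Rightarrow> 'a \<times> 'a \<times> 'a \<Rightarrow> 'a" where
  "gale_coord r x = (if r = r1 then fst x else if r = r2 then fst (snd x) else snd (snd x))"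

definition standard_coeff :: "bool \<Rightarrow> nat \<times> nat \<Rightarrow> nat \<times> nat \<Rightarrow> bit" where
  "standard_coeff k r v = gale_coord r (bit_gale_solution k (fst v))"

text \<open>The characteristic map that is the standard basis on \<open>F0\<close> and whose Gale vectors are
  \<open>bit_gale_solution k\<close>.\<close>

definition standard_char_map :: "bool \<Rightarrow> nat \<times> nat \<Rightarrow> nat \<Rightarrow> bit" where
  "standard_char_map k v i = (if i < n then (if v \<in> F0 then (if v = F0_enum i then 1 else 0)
      else standard_coeff k v (F0_enum i)) else 0)"

lemma standard_char_map_F0_enum:
  "l < n \<Longrightarrow> i < n \<Longrightarrow> standard_char_map k (F0_enum l) i = (if i = l then 1 else 0)"
  unfolding standard_char_map_def using F0_enum_in_F0 F0_enum_inj by auto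

lemma sum_F0_standard_char_map:
  assumes "i < n"
  shows "(\<Sum>v\<in>F0. f v * standard_char_map k v i) = f (F0_enum i)"
proof -
  have "(\<Sum>v\<in>F0. f v * standard_char_map k v i) = (\<Sum>v\<in>F0. if v = F0_enum i then f v else 0)"
    using assms unfolding standard_char_map_def by (intro sum.cong) auto
  then show ?thesis using F0_enum_in_F0[OF assms] finite_F by simp
qed

lemma lin_indep_F0_standard_char_map: "lin_indep_on n (standard_char_map k) F0"
  unfolding lin_indep_on_def lin_rel_def
proof (intro allI impI ballI)
  fix l v assume "\<forall>i<n. (\<Sum>v\<in>F0. l v * standard_char_map k v i) = 0" "v \<in> F0"
  moreover obtain i where "i < n" "v = F0_enum i" using bij_betw_F0_enum \<open>v \<in> F0\<close> unfolding bij_betw_def by auto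
  ultimately show "l v = 0" using sum_F0_standard_char_map by metis
qed

lemma is_combination_standard_char_map:
  assumes "r \<in> {r1,r2,r5}"
  shows "is_combination n (standard_char_map k) F0 (standard_coeff k r) (standard_char_map k r)"
  unfolding is_combination_def
proof (intro allI impI)
  fix i assume "i < n"
  have "r \<notin> F0" using assms notin_F by auto
  then have "standard_char_map k r i = standard_coeff k r (F0_enum i)"
    using \<open>i < n\<close> unfolding standard_char_map_def by simp
  then show "standard_char_map k r i = (\<Sum>v\<in>F0. standard_coeff k r v * standard_char_map k v i)"
    using sum_F0_standard_char_map[OF \<open>i < n\<close>] by simp
qed

lemma gale_vector_standard_coeff:
  assumes "v \<in> V"
  shows "gale_vector (standard_coeff k r1) (standard_coeff k r2) (standard_coeff k r5) v = bit_gale_solution k (fst v)"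
proof (cases "v \<in> F0")
  case True
  then have "gale_vector (standard_coeff k r1) (standard_coeff k r2) (standard_coeff k r5) v =
      (standard_coeff k r1 v, standard_coeff k r2 v, standard_coeff k r5 v)"
    using gale_vector_F[OF True, of "standard_coeff k r1" "standard_coeff k r2" "standard_coeff k r5"] by simp
  then show ?thesis unfolding standard_coeff_def gale_coord_def by (cases "bit_gale_solution k (fst v)") simp
next
  case False
  then have "v = r1 \<or> v = r2 \<or> v = r5" using assms V_eq by auto
  then show ?thesis using gale_vector_r by (auto simp: bit_gale_solution_simps)
qed

lemma lin_indep_standard_char_map_iff:
  assumes "x \<in> V" "y \<in> V" "z \<in> V"
  shows "lin_indep_on n (standard_char_map k) (V - {x,y,z}) \<longleftrightarrow>
    det3 (bit_gale_solution k (fst x)) (bit_gale_solution k (fst y)) (bit_gale_solution k (fst z)) = 1"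
  using lin_indep_on_complement_iff[OF is_combination_standard_char_map is_combination_standard_char_map
      is_combination_standard_char_map lin_indep_F0_standard_char_map assms]
  unfolding gale_vector_standard_coeff[OF assms(1)] gale_vector_standard_coeff[OF assms(2)]
    gale_vector_standard_coeff[OF assms(3)] det3_bit_eq_1_iff by simp

lemma char_map_standard_char_map: "char_map_Z2 a (standard_char_map k)"
  unfolding char_map_Z2_def
proof (intro conjI ballI allI impI)
  fix j show "in_Z2n n (standard_char_map k j)" unfolding in_Z2n_def standard_char_map_def by simp
next
  fix I assume I: "hface a I"
  then obtain x y z where xyz: "x \<in> V - I" "y \<in> V - I" "z \<in> V - I" "(fst x, fst y, fst z) \<in> centred_triples"
    unfolding hface_iff by blast
  then have "lin_indep_on n (standard_char_map k) (V - {x,y,z})"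
    using bit_gale_solution_unimodular[of k] lin_indep_standard_char_map_iff
    unfolding centred_unimodular_def by auto
  moreover have "I \<subseteq> V - {x,y,z}" using I xyz unfolding hface_iff by auto
  ultimately show "lin_indep_Z2 n (standard_char_map k) I"
    unfolding lin_indep_Z2_iff using lin_indep_on_subset finite_V by blast
qed

lemma standard_char_maps_not_DJ_equiv: "\<not> DJ_equiv a (standard_char_map True) (standard_char_map False)"
proof
  let ?r4 = "(4::nat, 0::nat)"
  have r4: "?r4 \<in> V" using base_point_in_V by simp
  assume "DJ_equiv a (standard_char_map True) (standard_char_map False)"
  then obtain A where "\<forall>v\<in>V. \<forall>i<n. standard_char_map False v i = (\<Sum>k<n. A i k * standard_char_map True v k)"
    unfolding DJ_equiv_def by blast
  then have transformed: "\<forall>v\<in>V - {r1,r2,?r4}. \<forall>i<n.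
      standard_char_map False v i = (\<Sum>k<n. A i k * standard_char_map True v k)" by blast
  have "lin_indep_on n (standard_char_map False) (V - {r1,r2,?r4})"
    using lin_indep_standard_char_map_iff[OF r_in_V(1,2) r4] bit_gale_solution_nonsingular by simp
  from lin_indep_on_if_transformed[OF transformed this] show False
    using lin_indep_standard_char_map_iff[OF r_in_V(1,2) r4] bit_gale_solution_singular by simp
qed

context
  fixes lam :: "nat \<times> nat \<Rightarrow> nat \<Rightarrow> bit" and c1 c2 c5 :: "nat \<times> nat \<Rightarrow> bit"
  assumes char: "char_map_Z2 a lam"
    and c1: "is_combination n lam F0 c1 (lam r1)"
    and c2: "is_combination n lam F0 c2 (lam r2)"
    and c5: "is_combination n lam F0 c5 (lam r5)"
begin

lemma det3_gale_vector_centred: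
  assumes "x \<in> V" "y \<in> V" "z \<in> V" "(fst x, fst y, fst z) \<in> centred_triples"
  shows "det3 (gale_vector c1 c2 c5 x) (gale_vector c1 c2 c5 y) (gale_vector c1 c2 c5 z) = 1"
proof -
  have "lin_indep_on n lam (V - {x,y,z})"
    using char hface_complement_triple(1)[OF assms] unfolding char_map_Z2_def lin_indep_Z2_iff by blast
  then show ?thesis
    using lin_indep_on_complement_iff[OF c1 c2 c5 lin_indep_F0_if_char_map[OF char] assms(1-3)]
    unfolding det3_bit_eq_1_iff by blast
qed

lemma gale_vector_eq_bit_gale_solution: "\<exists>k. \<forall>v\<in>V. gale_vector c1 c2 c5 v = bit_gale_solution k (fst v)"
proof -
  let ?G = "gale_vector c1 c2 c5"
  have "centred_unimodular (\<lambda>i. ?G (i,0))" unfolding centred_unimodular_def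
  proof (intro ballI, clarify)
    fix x y z assume xyz: "(x,y,z) \<in> centred_triples"
    then have "(x,0) \<in> V" "(y,0) \<in> V" "(z,0) \<in> V" using centred_triplesD base_point_in_V by auto
    then show "det3 (?G (x,0)) (?G (y,0)) (?G (z,0)) = 1" using det3_gale_vector_centred xyz by simp
  qed
  from bit_centred_unimodular_cases[OF this gale_vector_r]
  obtain k where k: "\<forall>i\<in>{1..7}. ?G (i,0) = bit_gale_solution k i" by blast
  have "?G v = bit_gale_solution k (fst v)" if v: "v \<in> V" for v
  proof -
    define \<sigma> where "\<sigma> j = (if j = fst v then v else (j,0))" for j
    have \<sigma>_V: "\<sigma> j \<in> V" if "j \<in> {1..7}" for j
      using v base_point_in_V[OF that] unfolding \<sigma>_def by simp
    have \<sigma>_fst: "fst (\<sigma> j) = j" for j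
      unfolding \<sigma>_def by simp
    have \<sigma>_G: "?G (\<sigma> j) = ((bit_gale_solution k)(fst v := ?G v)) j" if "j \<in> {1..7}" for j
      using k that unfolding \<sigma>_def by simp
    have "centred_unimodular ((bit_gale_solution k)(fst v := ?G v))" unfolding centred_unimodular_def
    proof (intro ballI, clarify)
      fix x y z assume xyz: "(x,y,z) \<in> centred_triples"
      then have "x \<in> {1..7}" "y \<in> {1..7}" "z \<in> {1..7}" using centred_triplesD by auto
      then show "det3 (((bit_gale_solution k)(fst v := ?G v)) x) (((bit_gale_solution k)(fst v := ?G v)) y)
          (((bit_gale_solution k)(fst v := ?G v)) z) = 1"
        using det3_gale_vector_centred[of "\<sigma> x" "\<sigma> y" "\<sigma> z"] \<sigma>_V \<sigma>_fst \<sigma>_G xyz by simp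
    qed
    then show ?thesis using bit_gale_solution_rigid fst_in_V[OF v] by blast
  qed
  then show ?thesis by blast
qed

lemma is_combination_standard_char_map_if_gale_vector_eq:
  assumes k: "\<forall>v\<in>V. gale_vector c1 c2 c5 v = bit_gale_solution k (fst v)"
  shows "is_combination n (standard_char_map k) F0 c1 (standard_char_map k r1)"
    "is_combination n (standard_char_map k) F0 c2 (standard_char_map k r2)"
    "is_combination n (standard_char_map k) F0 c5 (standard_char_map k r5)"
proof -
  have coeff: "c1 u = standard_coeff k r1 u" "c2 u = standard_coeff k r2 u" "c5 u = standard_coeff k r5 u"
    if "u \<in> F0" for u
  proof -
    have "u \<in> V" using that V_eq by blast
    then have "bit_gale_solution k (fst u) = gale_vector c1 c2 c5 u" using k by simp
    also have "\<dots> = (c1 u, c2 u, c5 u)" using gale_vector_F[OF that, of c1 c2 c5] by simp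
    finally have solution: "bit_gale_solution k (fst u) = (c1 u, c2 u, c5 u)" .
    show "c1 u = standard_coeff k r1 u" "c2 u = standard_coeff k r2 u" "c5 u = standard_coeff k r5 u"
      unfolding standard_coeff_def gale_coord_def solution by simp_all
  qed
  show "is_combination n (standard_char_map k) F0 c1 (standard_char_map k r1)"
    "is_combination n (standard_char_map k) F0 c2 (standard_char_map k r2)"
    "is_combination n (standard_char_map k) F0 c5 (standard_char_map k r5)"
    by (rule is_combination_cong[OF is_combination_standard_char_map]; simp add: coeff)+
qed

lemma DJ_equiv_standard_char_map_if_coeffs: "\<exists>k. DJ_equiv a (standard_char_map k) lam"
proof -
  obtain k where k: "\<forall>v\<in>V. gale_vector c1 c2 c5 v = bit_gale_solution k (fst v)"
    using gale_vector_eq_bit_gale_solution by blast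
  note std_coeffs = is_combination_standard_char_map_if_gale_vector_eq[OF k]
  have same_coeffs: "\<exists>c. is_combination n lam F0 c (lam v) \<and>
      is_combination n (standard_char_map k) F0 c (standard_char_map k v)" if "v \<in> V" for v
  proof (cases "v \<in> F0")
    case True
    then show ?thesis
      using is_combination_self[OF True finite_F, of n lam]
        is_combination_self[OF True finite_F, of n "standard_char_map k"] by blast
  next
    case False
    then have "v = r1 \<or> v = r2 \<or> v = r5" using that V_eq by auto
    then show ?thesis using c1 c2 c5 std_coeffs by blast
  qed
  have std: "\<forall>l<n. \<forall>i<n. standard_char_map k (F0_enum l) i = (if i = l then 1 else 0)"
    using standard_char_map_F0_enum by blast
  have "\<forall>i<n. lam v i = (\<Sum>l<n. lam (F0_enum l) i * standard_char_map k v l)" if v: "v \<in> V" for v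
  proof -
    obtain c where "is_combination n lam F0 c (lam v)"
      "is_combination n (standard_char_map k) F0 c (standard_char_map k v)"
      using same_coeffs[OF v] by blast
    from transformed_from_standard_basis[OF bij_betw_F0_enum std this] show ?thesis .
  qed
  then have "DJ_equiv a (standard_char_map k) lam"
    unfolding DJ_equiv_def using GL_Z2_if_lin_indep_F0[OF lin_indep_F0_if_char_map[OF char]] by blast
  then show ?thesis ..
qed

end

lemma DJ_equiv_standard_char_map: "char_map_Z2 a lam \<Longrightarrow> \<exists>k. DJ_equiv a (standard_char_map k) lam"
proof -
  assume char: "char_map_Z2 a lam"
  have "\<exists>c. is_combination n lam F0 c (lam r)" for r
    using spans_if_lin_indep_on[OF bij_betw_F0_enum lin_indep_F0_if_char_map[OF char]] .
  then show ?thesis using DJ_equiv_standard_char_map_if_coeffs[OF char] by metis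
qed

end

lemma of_int_basic_relation:
  "of_int (basic_relation F r c v) = basic_relation F r (\<lambda>u. of_int (c u)) v"
  unfolding basic_relation_def by simp

lemma (in basis_plus_three) of_int_dot3_gale_vector:
  "of_int (dot3 (p1,p2,p3) (gale_vector c1 c2 c3 v)) =
     dot3 (of_int p1, of_int p2, of_int p3) (gale_vector (\<lambda>u. of_int (c1 u)) (\<lambda>u. of_int (c2 u)) (\<lambda>u. of_int (c3 u)) v)"
  unfolding gale_vector_def of_int_basic_relation[symmetric] by simp

lemma ray_cone_insert_memI:
  fixes u :: "'v \<Rightarrow> nat \<Rightarrow> int"
  assumes "finite G" "y \<notin> G" "c0 \<ge> 0" "\<forall>v\<in>G. c v \<ge> 0"
  shows "(\<lambda>i. c0 * real_of_int (u y i) + (\<Sum>v\<in>G. c v * real_of_int (u v i))) \<in> ray_cone u (insert y G)"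
  unfolding ray_cone_def
proof (intro CollectI exI[of _ "\<lambda>v. if v = y then c0 else c v"] conjI allI ballI)
  fix j assume "j \<in> insert y G"
  then show "0 \<le> (if j = y then c0 else c j)" using assms(3,4) by auto
next
  fix i
  have "(\<Sum>v\<in>G. (if v = y then c0 else c v) * real_of_int (u v i)) = (\<Sum>v\<in>G. c v * real_of_int (u v i))"
    using assms(2) by (intro sum.cong) auto
  then show "c0 * real_of_int (u y i) + (\<Sum>v\<in>G. c v * real_of_int (u v i)) =
      (\<Sum>v\<in>insert y G. (if v = y then c0 else c v) * real_of_int (u v i))"
    using assms(1,2) by simp
qed

text \<open>If \<open>\<alpha> u\<^sub>z + \<beta> u\<^sub>w + \<Sum>\<^sub>G l\<^sub>v u\<^sub>v = 0\<close> with \<open>\<alpha> > 0 > \<beta>\<close>, then a point of the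
  wall spanned by \<open>G\<close>, pushed far enough towards \<open>u\<^sub>w\<close>, lies in both adjacent cones.\<close>

lemma ray_cones_overlap_if_wall_relation:
  fixes u :: "'v \<Rightarrow> nat \<Rightarrow> int" and l :: "'v \<Rightarrow> real"
  assumes G: "finite G" "z \<notin> G" "w \<notin> G"
    and rel: "\<forall>i. \<alpha> * real_of_int (u z i) + \<beta> * real_of_int (u w i) + (\<Sum>v\<in>G. l v * real_of_int (u v i)) = 0"
    and signs: "\<alpha> > 0" "\<beta> < 0"
    and wall: "ray_cone u (insert w G) \<inter> ray_cone u (insert z G) \<subseteq> ray_cone u G"
    and ind: "lin_indep_on n (\<lambda>v i. real_of_int (u v i)) (insert w G)"
  shows False
proof -
  define t where "t = (\<Sum>v\<in>G. \<bar>l v\<bar>)"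
  have lt: "\<bar>l v\<bar> \<le> t" if "v \<in> G" for v
    unfolding t_def using that G(1) by (intro member_le_sum) auto
  have "\<forall>v\<in>G. l v + t \<ge> 0"
  proof
    fix v assume "v \<in> G"
    then show "l v + t \<ge> 0" using lt[OF \<open>v \<in> G\<close>] by (simp add: abs_le_iff)
  qed
  have "t \<ge> 0" unfolding t_def by (simp add: sum_nonneg)
  define p where "p = (\<lambda>i. - \<beta> * real_of_int (u w i) + (\<Sum>v\<in>G. t * real_of_int (u v i)))"
  have "p \<in> ray_cone u (insert w G)"
    unfolding p_def using G signs \<open>t \<ge> 0\<close> by (intro ray_cone_insert_memI) auto
  moreover have "p = (\<lambda>i. \<alpha> * real_of_int (u z i) + (\<Sum>v\<in>G. (l v + t) * real_of_int (u v i)))"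
    using rel unfolding p_def by (auto simp: distrib_right sum.distrib algebra_simps)
  then have "p \<in> ray_cone u (insert z G)"
    using G signs \<open>\<forall>v\<in>G. l v + t \<ge> 0\<close> by (simp add: ray_cone_insert_memI[where c = "\<lambda>v. l v + t"])
  ultimately have "p \<in> ray_cone u G" using wall by blast
  then obtain s where s: "\<forall>i. p i = (\<Sum>v\<in>G. s v * real_of_int (u v i))"
    unfolding ray_cone_def by blast
  define \<kappa> where "\<kappa> = (\<lambda>v. if v = w then - \<beta> else t - s v)"
  have "(\<Sum>v\<in>insert w G. \<kappa> v * real_of_int (u v i)) = 0" for i
  proof -
    have "(\<Sum>v\<in>G. \<kappa> v * real_of_int (u v i)) = (\<Sum>v\<in>G. (t - s v) * real_of_int (u v i))"
      using G(3) unfolding \<kappa>_def by (intro sum.cong) auto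
    then show ?thesis
      using s[rule_format, of i] G unfolding p_def \<kappa>_def
      by (simp add: left_diff_distrib sum_subtractf sum_distrib_left)
  qed
  then have "\<kappa> w = 0" using ind unfolding lin_indep_on_def lin_rel_def by (simp add: mult.commute)
  then show False using signs unfolding \<kappa>_def by simp
qed

section \<open>No complete non-singular fan over the complex\<close>

locale complete_fan = heptagon_complex +
  fixes u :: "nat \<times> nat \<Rightarrow> nat \<Rightarrow> int"
  assumes fan: "complete_nonsing_fan a u"
begin

lemma u_in_Zn: "v \<in> V \<Longrightarrow> in_Zn n (u v)"
  using conjunct1[OF fan[unfolded complete_nonsing_fan_def]] by blast

lemma facet_in_lattice_basis: "hface a I \<Longrightarrow> inj_on u I \<and> (\<exists>B. Z_basis n B \<and> u ` I \<subseteq> B)"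
  using conjunct1[OF conjunct2[OF fan[unfolded complete_nonsing_fan_def]]] by blast

lemma ray_cone_Int: "hface a I \<Longrightarrow> hface a J \<Longrightarrow> ray_cone u I \<inter> ray_cone u J = ray_cone u (I \<inter> J)"
  using conjunct1[OF conjunct2[OF conjunct2[OF fan[unfolded complete_nonsing_fan_def]]]] by blast

lemma integral_combination_facet:
  assumes S: "hface a S" "card S = n" and x: "in_Zn n x"
  shows "\<exists>c. \<forall>i. x i = (\<Sum>v\<in>S. c v * u v i)"
proof -
  obtain B where inj: "inj_on u S" and B: "Z_basis n B" "u ` S \<subseteq> B"
    using facet_in_lattice_basis[OF S(1)] by blast
  have "card (u ` S) = n" using card_image[OF inj] S(2) by simp
  then have uS: "u ` S = B" using B unfolding Z_basis_def by (intro card_subset_eq) auto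
  obtain c where c: "\<forall>i. x i = (\<Sum>b\<in>B. c b * b i)" using B x unfolding Z_basis_def by blast
  have "(\<Sum>b\<in>B. c b * b i) = (\<Sum>v\<in>S. c (u v) * u v i)" for i
    unfolding uS[symmetric] using sum.reindex[OF inj, of "\<lambda>b. c b * b i"] by simp
  then show ?thesis using c by auto
qed

definition u_real :: "nat \<times> nat \<Rightarrow> nat \<Rightarrow> real" where
  "u_real v i = real_of_int (u v i)"

lemma lin_indep_u_real_facet:
  assumes S: "hface a S" "card S = n"
  shows "lin_indep_on n u_real S"
proof -
  have "finite S" using S(1) finite_V unfolding hface_def by (blast intro: finite_subset)
  then obtain e where e: "bij_betw e {..<n} S"
    using ex_bij_betw_nat_finite S(2) by (metis lessThan_atLeast0)
  show ?thesis
  proof (rule lin_indep_on_if_spans[OF e], intro allI impI)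
    fix k assume "k < n"
    then have "in_Zn n (\<lambda>i. if i = k then 1 else 0)" unfolding in_Zn_def by auto
    from integral_combination_facet[OF S this] obtain c
      where c: "\<forall>i. (if i = k then 1 else 0) = (\<Sum>v\<in>S. c v * u v i)" by blast
    have "(if i = k then 1 else 0) = (\<Sum>v\<in>S. real_of_int (c v) * u_real v i)" for i
      using arg_cong[OF c[rule_format, of i], of real_of_int] unfolding u_real_def by (cases "i = k") simp_all
    then show "\<exists>d. is_combination n u_real S d (\<lambda>i. if i = k then 1 else 0)"
      unfolding is_combination_def by (intro exI[of _ "\<lambda>v. real_of_int (c v)"]) blast
  qed
qed

text \<open>Gale vectors with respect to the facet \<open>F0\<close>; since \<open>u|F0\<close> is a lattice basis, their
  coordinates are integers.\<close>

definition int_coeff :: "nat \<times> nat \<Rightarrow> nat \<times> nat \<Rightarrow> int" where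
  "int_coeff r = (SOME c. \<forall>i. u r i = (\<Sum>v\<in>F0. c v * u v i))"

definition int_gale :: "nat \<times> nat \<Rightarrow> int \<times> int \<times> int" where
  "int_gale = gale_vector (int_coeff r1) (int_coeff r2) (int_coeff r5)"

lemma is_combination_int_coeff:
  assumes "r \<in> V"
  shows "is_combination n u_real F0 (\<lambda>v. of_int (int_coeff r v)) (u_real r)"
proof -
  have "\<exists>c. \<forall>i. u r i = (\<Sum>v\<in>F0. c v * u v i)"
    using integral_combination_facet[OF F0_hface card_F0 u_in_Zn[OF assms]] .
  then have "\<forall>i. u r i = (\<Sum>v\<in>F0. int_coeff r v * u v i)"
    unfolding int_coeff_def by (rule someI_ex)
  then have "u_real r i = (\<Sum>v\<in>F0. of_int (int_coeff r v) * u_real v i)" for i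
    using arg_cong[of _ _ real_of_int] unfolding u_real_def by simp
  then show ?thesis unfolding is_combination_def by simp
qed

lemmas is_combination_int_coeffs =
  is_combination_int_coeff[OF r_in_V(1)] is_combination_int_coeff[OF r_in_V(2)]
  is_combination_int_coeff[OF r_in_V(3)]

lemma lin_rel_int_gale: "lin_rel n u_real V (\<lambda>v. of_int (dot3 p (int_gale v)))"
proof -
  obtain p1 p2 p3 where p: "p = (p1,p2,p3)" by (cases p)
  show ?thesis
    using lin_rel_gale_dual[OF is_combination_int_coeffs, of "(of_int p1, of_int p2, of_int p3)"]
    unfolding p int_gale_def of_int_dot3_gale_vector .
qed

lemma int_relation_eq_int_gale:
  assumes "lin_rel n u_real V (\<lambda>v. of_int (l v))" "v \<in> V"
  shows "l v = dot3 (l r1, l r2, l r5) (int_gale v)"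
proof -
  have "real_of_int (l v) = real_of_int (dot3 (l r1, l r2, l r5) (int_gale v))"
    using lin_rel_eq_gale_dual[OF is_combination_int_coeffs lin_indep_u_real_facet[OF F0_hface card_F0] assms]
    unfolding int_gale_def of_int_dot3_gale_vector by simp
  then show ?thesis by (simp only: of_int_eq_iff)
qed

lemma dual_vector_facet:
  assumes xyz: "x \<in> V" "y \<in> V" "z \<in> V" "x \<noteq> y" "x \<noteq> z" "y \<noteq> z"
    and S: "hface a (V - {x,y,z})" "card (V - {x,y,z}) = n"
  shows "\<exists>p. dot3 p (int_gale x) = 1 \<and> dot3 p (int_gale y) = 0 \<and> dot3 p (int_gale z) = 0"
proof -
  let ?S = "V - {x,y,z}"
  have "V = insert x (insert y (insert z ?S))" using xyz(1-3) by blast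
  then interpret facet: basis_plus_three V ?S x y z
    using xyz(4-6) finite_V by unfold_locales simp_all
  obtain d where d: "\<forall>i. u x i = (\<Sum>v\<in>?S. d v * u v i)"
    using integral_combination_facet[OF S u_in_Zn[OF xyz(1)]] by blast
  have "u_real x i = (\<Sum>v\<in>?S. of_int (d v) * u_real v i)" for i
    using arg_cong[OF d[rule_format, of i], of real_of_int] unfolding u_real_def by simp
  then have "is_combination n u_real ?S (\<lambda>v. of_int (d v)) (u_real x)"
    unfolding is_combination_def by simp
  then have "lin_rel n u_real V (basic_relation ?S x (\<lambda>v. of_int (d v)))"
    by (intro facet.lin_rel_basic_relation) simp_all
  then have rel: "lin_rel n u_real V (\<lambda>v. of_int (basic_relation ?S x d v))"
    unfolding of_int_basic_relation .
  define l where "l = basic_relation ?S x d"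
  have eq: "l v = dot3 (l r1, l r2, l r5) (int_gale v)" if "v \<in> V" for v
    unfolding l_def by (rule int_relation_eq_int_gale[OF rel that])
  have "l x = 1" "l y = 0" "l z = 0"
    unfolding l_def basic_relation_def using xyz by auto
  then show ?thesis
    using eq[OF xyz(1), symmetric] eq[OF xyz(2), symmetric] eq[OF xyz(3), symmetric]
    by (intro exI[of _ "(l r1, l r2, l r5)"]) (simp only:)
qed

lemma abs_det3_int_gale_facet:
  assumes xyz: "x \<in> V" "y \<in> V" "z \<in> V" "x \<noteq> y" "x \<noteq> z" "y \<noteq> z"
    and S: "hface a (V - {x,y,z})" "card (V - {x,y,z}) = n"
  shows "\<bar>det3 (int_gale x) (int_gale y) (int_gale z)\<bar> = 1"
proof -
  have "V - {y,x,z} = V - {x,y,z}" "V - {z,x,y} = V - {x,y,z}" by auto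
  then have S': "hface a (V - {y,x,z})" "card (V - {y,x,z}) = n"
    and S'': "hface a (V - {z,x,y})" "card (V - {z,x,y}) = n"
    using S by simp_all
  obtain p where "dot3 p (int_gale x) = 1" "dot3 p (int_gale y) = 0" "dot3 p (int_gale z) = 0"
    using dual_vector_facet[OF xyz S] by blast
  moreover obtain q where "dot3 q (int_gale y) = 1" "dot3 q (int_gale x) = 0" "dot3 q (int_gale z) = 0"
    using dual_vector_facet[OF xyz(2,1,3) xyz(4)[symmetric] xyz(6,5) S'] by blast
  moreover obtain r where "dot3 r (int_gale z) = 1" "dot3 r (int_gale x) = 0" "dot3 r (int_gale y) = 0"
    using dual_vector_facet[OF xyz(3,1,2) xyz(5)[symmetric] xyz(6)[symmetric] xyz(4) S''] by blast
  ultimately show ?thesis by (intro det3_int_unit_if_dual_basis[of p _ _ _ q r])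
qed

lemma wall_relation_int_gale:
  assumes xyzw: "x \<in> V" "y \<in> V" "z \<in> V" "w \<in> V" "x \<noteq> y" "x \<noteq> z" "x \<noteq> w" "y \<noteq> z" "y \<noteq> w" "z \<noteq> w"
  defines "l \<equiv> \<lambda>v. real_of_int (det3 (int_gale x) (int_gale y) (int_gale v))"
  shows "l z * real_of_int (u z i) + l w * real_of_int (u w i)
    + (\<Sum>v\<in>V - {x,y,z,w}. l v * real_of_int (u v i)) = 0"
proof -
  define G where "G = V - {x,y,z,w}"
  have VG: "V = insert x (insert y (insert z (insert w G)))" using xyzw unfolding G_def by auto
  have G: "finite G" "x \<notin> G" "y \<notin> G" "z \<notin> G" "w \<notin> G" using finite_V unfolding G_def by auto
  have rel: "lin_rel n u_real V l" unfolding l_def dot3_cross3[symmetric] by (rule lin_rel_int_gale)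
  have "(\<Sum>v\<in>V. l v * u_real v i) = 0"
  proof (cases "i < n")
    case False
    then show ?thesis using u_in_Zn unfolding in_Zn_def u_real_def by simp
  qed (use rel in \<open>simp add: lin_rel_def\<close>)
  moreover have "l x = 0" "l y = 0" unfolding l_def by (simp_all add: det3_same_13 det3_same_23)
  ultimately show ?thesis using G xyzw unfolding VG G_def[symmetric] u_real_def by (simp add: algebra_simps)
qed

text \<open>Crossing the wall between adjacent facets does not change the sign of the Gale
  determinant; otherwise the wall relation would put \<open>u\<^sub>z\<close> and \<open>u\<^sub>w\<close> on the same side of it.\<close>

lemma det3_int_gale_adjacent_pos:
  assumes xyzw: "x \<in> V" "y \<in> V" "z \<in> V" "w \<in> V" "x \<noteq> y" "x \<noteq> z" "x \<noteq> w" "y \<noteq> z" "y \<noteq> w" "z \<noteq> w"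
    and F: "hface a (V - {x,y,z})" "card (V - {x,y,z}) = n"
    and F': "hface a (V - {x,y,w})" "card (V - {x,y,w}) = n"
  shows "det3 (int_gale x) (int_gale y) (int_gale z) * det3 (int_gale x) (int_gale y) (int_gale w) > 0"
proof (rule ccontr)
  define D1 where "D1 = det3 (int_gale x) (int_gale y) (int_gale z)"
  define D2 where "D2 = det3 (int_gale x) (int_gale y) (int_gale w)"
  define l where "l = (\<lambda>v. real_of_int (det3 (int_gale x) (int_gale y) (int_gale v)))"
  define G where "G = V - {x,y,z,w}"
  have "\<bar>D1\<bar> = 1" "\<bar>D2\<bar> = 1"
    unfolding D1_def D2_def using abs_det3_int_gale_facet xyzw F F' by simp_all
  moreover assume "\<not> D1 * D2 > 0"
  ultimately have signs: "D1 > 0 \<and> D2 < 0 \<or> D1 < 0 \<and> D2 > 0"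
    by (auto simp: zero_less_mult_iff abs_if split: if_splits)
  have rel: "\<forall>i. real_of_int D1 * real_of_int (u z i) + real_of_int D2 * real_of_int (u w i)
      + (\<Sum>v\<in>G. l v * real_of_int (u v i)) = 0"
    using wall_relation_int_gale[OF xyzw] unfolding D1_def D2_def l_def G_def by simp
  have G: "finite G" "z \<notin> G" "w \<notin> G" using finite_V unfolding G_def by auto
  have facets: "insert w G = V - {x,y,z}" "insert z G = V - {x,y,w}" using xyzw unfolding G_def by auto
  have wall: "ray_cone u (insert w G) \<inter> ray_cone u (insert z G) = ray_cone u G"
  proof -
    have "(V - {x,y,z}) \<inter> (V - {x,y,w}) = G" unfolding G_def by auto
    then show ?thesis unfolding facets using ray_cone_Int F(1) F'(1) by metis
  qed
  have indep: "lin_indep_on n (\<lambda>v i. real_of_int (u v i)) (insert p G)"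
    if "hface a (insert p G)" "card (insert p G) = n" for p
    using lin_indep_u_real_facet[OF that] unfolding u_real_def[abs_def] .
  from signs show False
  proof
    assume "D1 > 0 \<and> D2 < 0"
    then show False
      using ray_cones_overlap_if_wall_relation[OF G rel _ _ _ indep[OF F[folded facets]]] wall by simp
  next
    assume "D1 < 0 \<and> D2 > 0"
    have rel': "\<forall>i. real_of_int D2 * real_of_int (u w i) + real_of_int D1 * real_of_int (u z i)
        + (\<Sum>v\<in>G. l v * real_of_int (u v i)) = 0"
      using rel by (simp add: algebra_simps)
    show False
      using ray_cones_overlap_if_wall_relation[OF G(1,3,2) rel' _ _ _ indep[OF F'[folded facets]]]
        wall \<open>D1 < 0 \<and> D2 > 0\<close> by (simp add: Int_commute)
  qed
qed

lemma base_point_facet: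
  assumes "(i,j,k) \<in> centred_triples"
  shows "hface a (V - {(i,0),(j,0),(k,0)})" "card (V - {(i,0),(j,0),(k,0)}) = n"
  using hface_complement_triple[of "(i,0)" "(j,0)" "(k,0)"] base_point_in_V centred_triplesD[OF assms] assms
  by auto

definition base_det :: "nat \<Rightarrow> nat \<Rightarrow> nat \<Rightarrow> int" where
  "base_det i j k = det3 (int_gale (i,0)) (int_gale (j,0)) (int_gale (k,0))"

lemma base_det_swap: "base_det i j k = - base_det i k j"
  and base_det_rotate: "base_det i j k = base_det j k i"
  unfolding base_det_def by (simp add: det3_swap_23[of _ "int_gale (j,0)"], rule det3_rotate[symmetric])

lemma base_det_adjacent:
  assumes t: "(p,q,r) \<in> centred_triples" "{x,y,z} = {p,q,r}"
    and t': "(p',q',r') \<in> centred_triples" "{x,y,w} = {p',q',r'}"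
    and "z \<noteq> w"
  shows "base_det x y z = base_det x y w"
proof -
  have "p < q" "q < r" "p' < q'" "q' < r'" using centred_triplesD t(1) t'(1) by auto
  then have "card {x,y,z} = 3" "card {x,y,w} = 3" unfolding t(2) t'(2) by simp_all
  then have distinct: "x \<noteq> y" "x \<noteq> z" "x \<noteq> w" "y \<noteq> z" "y \<noteq> w" "z \<noteq> w"
    using \<open>z \<noteq> w\<close> by (auto simp: card_insert_if split: if_splits)
  have "{x,y,z} \<subseteq> {1..7}" "{x,y,w} \<subseteq> {1..7}"
    unfolding t(2) t'(2) using centred_triplesD[OF t(1)] centred_triplesD[OF t'(1)] by auto
  then have V: "(x,0) \<in> V" "(y,0) \<in> V" "(z,0) \<in> V" "(w,0) \<in> V" using base_point_in_V by auto
  have "{(x,0::nat),(y,0),(z,0)} = {(p,0),(q,0),(r,0)}" "{(x,0::nat),(y,0),(w,0)} = {(p',0),(q',0),(r',0)}"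
    using arg_cong[OF t(2), of "image (\<lambda>i. (i,0::nat))"] arg_cong[OF t'(2), of "image (\<lambda>i. (i,0::nat))"]
    by simp_all
  then have F: "hface a (V - {(x,0),(y,0),(z,0)})" "card (V - {(x,0),(y,0),(z,0)}) = n"
    and F': "hface a (V - {(x,0),(y,0),(w,0)})" "card (V - {(x,0),(y,0),(w,0)}) = n"
    using base_point_facet[OF t(1)] base_point_facet[OF t'(1)] by simp_all
  have "\<bar>base_det x y z\<bar> = 1" "\<bar>base_det x y w\<bar> = 1"
    unfolding base_det_def using abs_det3_int_gale_facet V distinct F F' by simp_all
  moreover have "base_det x y z * base_det x y w > 0"
    unfolding base_det_def using det3_int_gale_adjacent_pos V distinct F F' by simp
  ultimately show ?thesis by (auto simp: abs_if zero_less_mult_iff split: if_splits)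
qed

lemma int_gale_base_points: "int_gale (1,0) = (1,0,0)" "int_gale (2,0) = (0,1,0)" "int_gale (5,0) = (0,0,1)"
  unfolding int_gale_def using gale_vector_r by simp_all

text \<open>The sign of the Gale determinant propagates from the facet \<open>{1,2,5}\<close> to all centred
  triples, which yields an integral normalised unimodular configuration.\<close>

theorem no_complete_fan: False
proof -
  have "base_det 1 2 5 = 1" unfolding base_det_def int_gale_base_points by simp
  moreover have "base_det 1 2 5 = base_det 1 3 5"
    using base_det_adjacent[of 1 2 5 1 5 2 1 3 5 3] base_det_swap[of 1 2 5] base_det_swap[of 1 3 5] by (simp add: centred_triples_def insert_commute)
  moreover have "base_det 1 3 5 = base_det 1 3 6"
    using base_det_adjacent[of 1 3 5 1 3 5 1 3 6 6]  by (simp add: centred_triples_def insert_commute)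
  moreover have "base_det 1 2 5 = base_det 1 4 5"
    using base_det_adjacent[of 1 2 5 1 5 2 1 4 5 4] base_det_swap[of 1 2 5] base_det_swap[of 1 4 5] by (simp add: centred_triples_def insert_commute)
  moreover have "base_det 1 4 5 = base_det 1 4 6"
    using base_det_adjacent[of 1 4 5 1 4 5 1 4 6 6]  by (simp add: centred_triples_def insert_commute)
  moreover have "base_det 1 4 6 = base_det 1 4 7"
    using base_det_adjacent[of 1 4 6 1 4 6 1 4 7 7]  by (simp add: centred_triples_def insert_commute)
  moreover have "base_det 1 3 6 = base_det 2 3 6"
    using base_det_adjacent[of 1 3 6 3 6 1 2 3 6 2] base_det_rotate[of 1 3 6] base_det_rotate[of 2 3 6] by (simp add: centred_triples_def insert_commute)
  moreover have "base_det 2 3 6 = base_det 2 4 6"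
    using base_det_adjacent[of 2 3 6 2 6 3 2 4 6 4] base_det_swap[of 2 3 6] base_det_swap[of 2 4 6] by (simp add: centred_triples_def insert_commute)
  moreover have "base_det 2 4 6 = base_det 2 4 7"
    using base_det_adjacent[of 2 4 6 2 4 6 2 4 7 7]  by (simp add: centred_triples_def insert_commute)
  moreover have "base_det 1 2 5 = base_det 2 5 6"
    using base_det_adjacent[of 1 2 5 2 5 1 2 5 6 6] base_det_rotate[of 1 2 5] by (simp add: centred_triples_def insert_commute)
  moreover have "base_det 2 5 6 = base_det 2 5 7"
    using base_det_adjacent[of 2 5 6 2 5 6 2 5 7 7]  by (simp add: centred_triples_def insert_commute)
  moreover have "base_det 2 4 7 = base_det 3 4 7"
    using base_det_adjacent[of 2 4 7 4 7 2 3 4 7 3] base_det_rotate[of 2 4 7] base_det_rotate[of 3 4 7] by (simp add: centred_triples_def insert_commute)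
  moreover have "base_det 2 5 7 = base_det 3 5 7"
    using base_det_adjacent[of 2 5 7 5 7 2 3 5 7 3] base_det_rotate[of 2 5 7] base_det_rotate[of 3 5 7] by (simp add: centred_triples_def insert_commute)
  moreover have "base_det 3 5 7 = base_det 3 6 7"
    using base_det_adjacent[of 3 5 7 3 7 5 3 6 7 6] base_det_swap[of 3 5 7] base_det_swap[of 3 6 7] by (simp add: centred_triples_def insert_commute)
  ultimately have "centred_unimodular (\<lambda>i. int_gale (i,0))"
    unfolding centred_unimodular_iff base_det_def[symmetric] by simp
  then show False using int_centred_unimodular_impossible int_gale_base_points by blast
qed

end

theorem proposition8p4:
  fixes a :: "nat \<Rightarrow> nat"
  assumes "\<forall>i\<in>{1..7}. a i > 0"
  shows "\<exists>lam1 lam2. char_map_Z2 a lam1 \<and> char_map_Z2 a lam2 \<and> \<not> DJ_equiv a lam1 lam2 \<and>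
           (\<forall>lam. char_map_Z2 a lam \<longrightarrow> DJ_equiv a lam1 lam \<or> DJ_equiv a lam2 lam)
         \<and> (\<forall>lam. char_map_Z2 a lam \<longrightarrow> \<not> real_toric a lam)"
proof -
  interpret heptagon_complex a using assms by unfold_locales
  have no_real_toric: "\<not> real_toric a lam" for lam
  proof
    assume "real_toric a lam"
    then obtain u where "complete_nonsing_fan a u" unfolding real_toric_def by blast
    then interpret complete_fan a u by unfold_locales
    show False by (rule no_complete_fan)
  qed
  show ?thesis
  proof (intro exI conjI allI impI)
    show "char_map_Z2 a (standard_char_map True)" "char_map_Z2 a (standard_char_map False)"
      by (rule char_map_standard_char_map)+
    show "\<not> DJ_equiv a (standard_char_map True) (standard_char_map False)"
      by (rule standard_char_maps_not_DJ_equiv)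
    fix lam assume "char_map_Z2 a lam"
    then obtain k where "DJ_equiv a (standard_char_map k) lam"
      using DJ_equiv_standard_char_map by blast
    then show "DJ_equiv a (standard_char_map True) lam \<or> DJ_equiv a (standard_char_map False) lam"
      by (cases k) simp_all
  next
    fix lam show "\<not> real_toric a lam" by (rule no_real_toric)
  qed
qed

end
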